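(* Let $n=2^{s}$ and $q=2^{r}$ with $s,r$ positive integers. Then for every positive integer $h$, \[ q^{\binom{n}{2}h}MK_{n-1}^{h}=\sum_{i=0}^{h-1}(-1)^{h+i+1}\binom{h}{i}N^{h-i}q^{\binom{n}{2}i}MK_{n-1}^{i} +q\sum_{i=0}^{\min\{N,h\}}(-1)^{h+i}C_{i}\sum_{t=i}^{h}t!\,S(h,t)\,2^{h-t}\binom{N-i}{N-t}, \] where $N=q^{\binom{n}{2}}\prod_{j=2}^{n}(q^{j}-1)$ is the order of $SL(n,q)$, $S(h,t)=\frac{1}{t!}\sum_{j=0}^{t}(-1)^{t-j}\binom{t}{j}j^{h}$ is the Stirling number of the second kind, and $\{C_i\}_{i=0}^{N}$ is the weight distribution of the code $C=C(SL(n,q))$. Moreover, for $0\le i\le N$, \[ C_{i}=\sum\prod_{\beta\in\mathbb{F}_{q}}\binom{n_{\beta}}{\nu_{\beta}}, \] where the sum runs over all families of nonnegative integers $\{\nu_\beta\}_{\beta\in\mathbb{F}_q}$ with $\sum_{\beta}\nu_\beta=i$ and $\sum_{\beta}\nu_\beta\beta=0$ (an identity in $\mathbb{F}_q$), and \[ n_\beta=|\{g\in SL(n,q): Tr(g)=\beta\}|=q^{\binom{n}{2}-1}\Big\{\prod_{j=2}^{n}(q^{j}-1)+1+q\,\theta(\beta)\Big\},\qquad \theta(\beta)=\begin{cases}K_{n-2}(\lambda;\beta^{-1}),&\beta\neq0,\\ 0,&\beta=0.\end{cases} \]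
   Context: $\mathbb{F}_q$ is the finite field with $q$ elements, $tr(x)=x+x^2+\cdots+x^{2^{r-1}}$ is the absolute trace $\mathbb{F}_q\to\mathbb{F}_2$, and $\lambda(x)=(-1)^{tr(x)}$ is the canonical additive character. For a positive integer $m$ and $a\in\mathbb{F}_q^*$, the $m$-dimensional Kloosterman sum is $K_m(\lambda;a)=\sum_{\alpha_1,\dots,\alpha_m\in\mathbb{F}_q^*}\lambda(\alpha_1+\cdots+\alpha_m+a\alpha_1^{-1}\cdots\alpha_m^{-1})$; by convention $K_0(\lambda;a)=\lambda(a)$. The $h$-th moment is $MK_m^{h}=\sum_{a\in\mathbb{F}_q^*}K_m(\lambda;a)^h$ (so $MK_m^0=q-1$). $Tr(g)$ denotes the matrix trace. Fix an ordering $g_1,\dots,g_N$ of $SL(n,q)$ and let $v=(Tr(g_1),\dots,Tr(g_N))\in\mathbb{F}_q^N$; the binary code is $C(SL(n,q))=\{u\in\mathbb{F}_2^N: u\cdot v=0\}$ (dot product computed in $\mathbb{F}_q$). $C_i$ is the number of codewords of Hamming weight $i$ in this code. Convention: $\binom{b}{a}=0$ if $b<a$. *)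

theory Defs
  imports "HOL-Analysis.Analysis" "HOL-Combinatorics.Stirling"
begin

text \<open>Absolute trace F_q -> F_2 (viewed inside F_q), where q = 2^r.\<close>
definition abs_tr :: "nat \<Rightarrow> 'a::field \<Rightarrow> 'a" where
  "abs_tr r x = (\<Sum>i<r. x ^ (2 ^ i))"

text \<open>Canonical additive character lambda(x) = (-1)^(tr x); tr x is 0 or 1 in F_2.\<close>
definition add_char :: "nat \<Rightarrow> 'a::field \<Rightarrow> int" where
  "add_char r x = (if abs_tr r x = 0 then 1 else -1)"

definition kloosterman :: "nat \<Rightarrow> nat \<Rightarrow> 'a::{field,finite} \<Rightarrow> int" where
  "kloosterman r m a =
     (\<Sum>\<alpha>\<in>PiE {..<m} (\<lambda>_. UNIV - {0}).
        add_char r ((\<Sum>i<m. \<alpha> i) + a * inverse (\<Prod>i<m. \<alpha> i)))"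

definition MK :: "nat \<Rightarrow> 'a::{field,finite} itself \<Rightarrow> nat \<Rightarrow> nat \<Rightarrow> int" where
  "MK r _ m h = (\<Sum>a\<in>(UNIV::'a set) - {0}. kloosterman r m a ^ h)"

definition SL :: "('a::field ^'n::finite^'n) set" where
  "SL = {A. det A = 1}"

text \<open>The binary code C(SL(n,q)): binary vectors indexed by the elements of SL(n,q)
  (entries in {0,1}, zero outside SL), orthogonal to the vector of traces, dot product in F_q.\<close>
definition SL_code :: "(('a::{field,finite}^'n::finite^'n) \<Rightarrow> nat) set" where
  "SL_code = {u. (\<forall>g. u g \<in> {0,1}) \<and> (\<forall>g. g \<notin> SL \<longrightarrow> u g = 0) \<and>
                 (\<Sum>g\<in>SL. of_nat (u g) * trace g) = (0::'a)}"

definition hweight :: "(('a::{field,finite}^'n::finite^'n) \<Rightarrow> nat) \<Rightarrow> nat" where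
  "hweight u = card {g\<in>SL. u g \<noteq> 0}"

definition weight_dist :: "('a::{field,finite}^'n::finite^'n) itself \<Rightarrow> nat \<Rightarrow> nat" where
  "weight_dist _ i = card {u \<in> (SL_code :: (('a^'n^'n) \<Rightarrow> nat) set). hweight u = i}"

definition theta :: "nat \<Rightarrow> nat \<Rightarrow> 'a::{field,finite} \<Rightarrow> int" where
  "theta r n \<beta> = (if \<beta> = 0 then 0 else kloosterman r (n - 2) (inverse \<beta>))"

end

theory Submission
  imports Defs "HOL-Computational_Algebra.Polynomial"
begin

text \<open>
  Write \<open>q = 2^r\<close>, \<open>N = |SL(n,q)|\<close> and \<open>\<lambda>\<close> for the canonical additive character.
  Counting \<open>SL(n,q)\<close> by a column gives \<open>N\<close>. Bordering a matrix by a new row and column turns the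
  sum of \<open>\<lambda>(tr A)\<close> over the matrices of determinant \<open>d\<close> into a multiplicative convolution of the
  same sum in one dimension less, so by induction it equals \<open>q^(n choose 2) K_(n-1)(d)\<close>. Scaling by
  \<open>a\<close> gives \<open>\<Sum>_(g \<in> SL) \<lambda>(a tr g) = q^(n choose 2) K_(n-1)(a^n)\<close>, and as \<open>n\<close> is a power of 2,
  \<open>a \<mapsto> a^n\<close> permutes \<open>F_q^*\<close>. Orthogonality of \<open>\<lambda>\<close> then yields the number \<open>n_\<beta>\<close> of matrices of
  trace \<open>\<beta>\<close>, and the weights \<open>C_i\<close> count the \<open>i\<close>-subsets of \<open>SL(n,q)\<close> with trace sum 0 by their
  trace profile.

  For the moments, the number \<open>w(a)\<close> of \<open>g\<close> with \<open>\<lambda>(a tr g) = -1\<close> satisfies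
  \<open>2 w(a) = N - q^(n choose 2) K_(n-1)(a^n)\<close>, so \<open>\<Sum>_a (2 w(a))^h\<close> expands binomially into the
  moments \<open>MK^i\<close>. Alternatively, expanding \<open>w(a)^h\<close> by Stirling numbers into binomials
  \<open>w(a) choose t\<close> and counting \<open>t\<close>-subsets of \<open>{g. \<lambda>(a tr g) = -1}\<close> through \<open>\<Prod>(1 - \<lambda>(a tr g))\<close>
  reduces the same sum, by inclusion--exclusion, to the numbers \<open>C_i\<close>.
\<close>

section \<open>Matrices agreeing with the identity outside an index set\<close>

definition ident_outside :: "'n::finite set \<Rightarrow> ('a::zero_neq_one ^'n^'n) set" where
  "ident_outside I = {A. \<forall>i j. (i \<notin> I \<or> j \<notin> I) \<longrightarrow> A$i$j = (if i = j then 1 else 0)}"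

definition vec_supported :: "'n::finite set \<Rightarrow> ('a::zero ^'n) set" where
  "vec_supported J = {v. \<forall>j. j \<notin> J \<longrightarrow> v$j = 0}"

definition partial_trace :: "'n::finite set \<Rightarrow> ('a::comm_monoid_add ^'n^'n) \<Rightarrow> 'a" where
  "partial_trace I A = (\<Sum>i\<in>I. A$i$i)"

definition border :: "'n::finite \<Rightarrow> 'a^'n^'n \<Rightarrow> 'a \<Rightarrow> 'a^'n \<Rightarrow> 'a^'n \<Rightarrow> 'a^'n^'n" where
  "border k h x v c = (\<chi> i j. if i = k \<and> j = k then x else if i = k then v$j else if j = k then c$i else h$i$j)"

definition column_matrix :: "'n::finite \<Rightarrow> 'a::zero_neq_one^'n \<Rightarrow> 'a^'n^'n" where
  "column_matrix k u = (\<chi> i j. if j = k then u$i else if i = j then 1 else 0)"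

lemma border_nth[simp]: "border k h x v c $ i $ j =
   (if i = k \<and> j = k then x else if i = k then v$j else if j = k then c$i else h$i$j)"
  by (simp add: border_def)

lemma column_matrix_nth[simp]: "column_matrix k u $ i $ j = (if j = k then u$i else if i = j then 1 else 0)"
  by (simp add: column_matrix_def)

lemma matrix_mult_nth: "(A ** B) $ i $ j = (\<Sum>l\<in>UNIV. A$i$l * B$l$j)"
  by (simp add: matrix_matrix_mult_def)

lemma sum_delta_mult_left: "(\<Sum>l\<in>UNIV. (if i = l then 1 else 0) * (f l :: 'a::semiring_1)) = f (i::'n::finite)"
proof -
  have "(\<Sum>l\<in>UNIV. (if i = l then 1 else 0) * (f l :: 'a::semiring_1)) = (\<Sum>l\<in>UNIV. if i = l then f l else 0)"
    by (rule sum.cong) auto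
  also have "\<dots> = f i" by (simp add: sum.delta)
  finally show ?thesis .
qed

lemma sum_delta_mult_right: "(\<Sum>l\<in>UNIV. (f l :: 'a::semiring_1) * (if l = j then 1 else 0)) = f (j::'n::finite)"
proof -
  have "(\<Sum>l\<in>UNIV. (f l :: 'a::semiring_1) * (if l = j then 1 else 0)) = (\<Sum>l\<in>UNIV. if l = j then f l else 0)"
    by (rule sum.cong) auto
  also have "\<dots> = f j" by (simp add: sum.delta)
  finally show ?thesis .
qed

lemma card_vec_supported: "card (vec_supported J :: (('a::{zero,finite})^'n::finite) set) = CARD('a) ^ card J"
proof -
  have bij: "bij_betw (\<lambda>v. restrict (\<lambda>j. v$j) J) (vec_supported J :: ('a^'n) set) (PiE J (\<lambda>_. UNIV))"
  proof (rule bij_betwI')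
    fix v w :: "'a^'n" assume "v \<in> vec_supported J" "w \<in> vec_supported J"
    thus "(restrict (\<lambda>j. v$j) J = restrict (\<lambda>j. w$j) J) = (v = w)"
      by (auto simp: vec_supported_def vec_eq_iff restrict_def fun_eq_iff) metis
  next
    fix v :: "'a^'n" assume "v \<in> vec_supported J" thus "restrict (\<lambda>j. v$j) J \<in> PiE J (\<lambda>_. UNIV)" by simp
  next
    fix f assume f: "f \<in> PiE J (\<lambda>_. (UNIV::'a set))"
    show "\<exists>v\<in>vec_supported J. f = restrict (\<lambda>j. v$j) J"
      by (rule bexI[where x="\<chi> j. if j \<in> J then f j else 0"])
         (use f in \<open>auto simp: vec_supported_def restrict_def fun_eq_iff PiE_iff extensional_def\<close>)
  qed
  have "card (vec_supported J :: ('a^'n) set) = card (PiE J (\<lambda>_. (UNIV::'a set)))" by (rule bij_betw_same_card[OF bij])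
  also have "\<dots> = CARD('a) ^ card J" by (simp add: card_PiE)
  finally show ?thesis .
qed

lemma bij_betw_border:
  assumes k: "k \<notin> J"
  shows "bij_betw (\<lambda>(h,x,v,c). border k h x v c) (ident_outside J \<times> UNIV \<times> vec_supported J \<times> vec_supported J)
            (ident_outside (insert k J) :: ('a::zero_neq_one^'n::finite^'n) set)"
proof (rule bij_betwI[where g="\<lambda>A. ((\<chi> i j. if i = k \<or> j = k then (if i = j then 1 else 0) else A$i$j),
    A$k$k, (\<chi> j. if j = k then 0 else A$k$j), (\<chi> i. if i = k then 0 else A$i$k))"])
qed (use k in \<open>auto simp: ident_outside_def vec_supported_def vec_eq_iff\<close>)

lemma row_mat_1: "row i (mat 1 :: 'a::zero_neq_one^'n::finite^'n) = axis i 1"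
  by (auto simp: row_def mat_def axis_def vec_eq_iff)

lemma det_column_matrix: "det (column_matrix k u :: 'a::field^'n::finite^'n) = u$k"
proof -
  define w where "w = (\<chi> j. if j = k then (0::'a) else u$j)"
  define A where "A = (\<chi> l. if l = k then (u$k) *s axis k 1 else row l (mat 1 :: 'a^'n^'n))"
  have w_span: "w \<in> vec.span {row j A | j. j \<noteq> k}"
  proof -
    have "w = (\<Sum>j\<in>UNIV-{k}. (u$j) *s axis j 1)"
      by (auto simp: vec_eq_iff w_def axis_def if_distrib cong: if_cong)
    moreover have "(u$j) *s axis j 1 \<in> vec.span {row j A | j. j \<noteq> k}" if "j \<in> UNIV - {k}" for j
    proof -
      have "axis j 1 = row j A" using that by (simp add: A_def row_def row_mat_1[symmetric])
      hence "axis j 1 \<in> {row j A | j. j \<noteq> k}" using that by blast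
      thus ?thesis by (intro vec.span_scale vec.span_base)
    qed
    ultimately show ?thesis by (auto intro!: vec.span_sum)
  qed
  have "transpose (column_matrix k u) = (\<chi> i. if i = k then row k A + w else row i A)"
    by (auto simp: vec_eq_iff transpose_def A_def w_def row_def mat_def axis_def)
  hence "det (column_matrix k u) = det (\<chi> i. if i = k then row k A + w else row i A)"
    by (metis det_transpose)
  also have "\<dots> = det A" by (rule det_row_span[OF w_span])
  also have "A = (\<chi> l. if l = k then (u$k) *s axis k 1 else row l (mat 1 :: 'a^'n^'n))" by (simp add: A_def)
  also have "det \<dots> = u$k * det (\<chi> l. if l = k then axis k 1 else row l (mat 1 :: 'a^'n^'n))"
    by (rule det_row_mul)
  also have "(\<chi> l. if l = k then axis k 1 else row l (mat 1 :: 'a^'n^'n)) = mat 1"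
    by (auto simp: vec_eq_iff row_def mat_def axis_def)
  finally show ?thesis by simp
qed

lemma ident_outside_mult:
  assumes "A \<in> ident_outside I" "B \<in> ident_outside I"
  shows "A ** B \<in> ident_outside I"
proof -
  have "(A ** B) $ i $ j = (if i = j then 1 else 0)" if "i \<notin> I \<or> j \<notin> I" for i j
  proof (cases "i \<notin> I")
    case True
    hence "(A ** B) $ i $ j = (\<Sum>l\<in>UNIV. (if i = l then 1 else 0) * B$l$j)"
      using assms(1) by (simp add: matrix_mult_nth ident_outside_def)
    also have "\<dots> = B$i$j" by (rule sum_delta_mult_left)
    finally show ?thesis using True assms(2) by (simp add: ident_outside_def)
  next
    case False
    hence j: "j \<notin> I" using that by simp
    hence "(A ** B) $ i $ j = (\<Sum>l\<in>UNIV. A$i$l * (if l = j then 1 else 0))"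
      using assms(2) by (simp add: matrix_mult_nth ident_outside_def)
    also have "\<dots> = A$i$j" by (rule sum_delta_mult_right)
    finally show ?thesis using j assms(1) by (simp add: ident_outside_def)
  qed
  thus ?thesis by (simp add: ident_outside_def)
qed

lemma ident_outside_inverse:
  assumes A: "A \<in> ident_outside I" and AF: "A ** F = mat 1" and FA: "F ** A = mat 1"
  shows "F \<in> ident_outside I"
proof -
  have "F $ i $ j = (if i = j then 1 else 0)" if "i \<notin> I \<or> j \<notin> I" for i j
  proof (cases "i \<notin> I")
    case True
    have "(A ** F) $ i $ j = (\<Sum>l\<in>UNIV. (if i = l then 1 else 0) * F$l$j)"
      using A True by (simp add: matrix_mult_nth ident_outside_def)
    also have "\<dots> = F$i$j" by (rule sum_delta_mult_left)
    finally show ?thesis using AF by (simp add: mat_def)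
  next
    case False
    hence j: "j \<notin> I" using that by simp
    have "(F ** A) $ i $ j = (\<Sum>l\<in>UNIV. F$i$l * (if l = j then 1 else 0))"
      using A j by (simp add: matrix_mult_nth ident_outside_def)
    also have "\<dots> = F$i$j" by (rule sum_delta_mult_right)
    finally show ?thesis using FA by (simp add: mat_def)
  qed
  thus ?thesis by (simp add: ident_outside_def)
qed


lemma det_border_split:
  "det (border k h x v c :: 'a::field^'n::finite^'n) = x * det (border k h 1 0 c) + det (border k h 0 v c)"
proof -
  define B where "B = border k h 0 0 c"
  define v0 where "v0 = (\<chi> j. if j = k then 0 else v$j)"
  have e0: "border k h x v c = (\<chi> i. if i = k then x *s axis k 1 + v0 else B$i)"
    by (auto simp: vec_eq_iff B_def v0_def axis_def)
  have e1: "(\<chi> i. if i = k then axis k 1 else B$i) = border k h 1 0 c"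
    by (auto simp: vec_eq_iff B_def axis_def)
  have e2: "(\<chi> i. if i = k then v0 else B$i) = border k h 0 v c"
    by (auto simp: vec_eq_iff B_def v0_def)
  have "det (border k h x v c) = det (\<chi> i. if i = k then x *s axis k 1 else B$i) + det (\<chi> i. if i = k then v0 else B$i)"
    unfolding e0 by (rule det_row_add)
  also have "det (\<chi> i. if i = k then x *s axis k 1 else B$i) = x * det (\<chi> i. if i = k then axis k 1 else B$i)"
    by (rule det_row_mul)
  finally show ?thesis unfolding e1 e2 .
qed

lemma column_matrix_mult_nth:
  "(column_matrix k u ** h) $ i $ j = u$i * h$k$j + (if i = k then 0 else h$i$j :: 'a::semiring_1)"
proof -
  have "(column_matrix k u ** h) $ i $ j = (\<Sum>l\<in>UNIV. column_matrix k u $ i $ l * h$l$j)" by (rule matrix_mult_nth)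
  also have "\<dots> = column_matrix k u $ i $ k * h$k$j + (\<Sum>l\<in>UNIV-{k}. column_matrix k u $ i $ l * h$l$j)"
    by (subst sum.remove[of UNIV k]) auto
  also have "(\<Sum>l\<in>UNIV-{k}. column_matrix k u $ i $ l * h$l$j) = (\<Sum>l\<in>UNIV-{k}. if l = i then h$l$j else 0)"
    by (rule sum.cong) auto
  also have "\<dots> = (if i = k then 0 else h$i$j)" by (simp add: sum.delta')
  finally show ?thesis by simp
qed

lemma det_border_1:
  assumes h: "h \<in> ident_outside J" and c: "c \<in> vec_supported J" and k: "k \<notin> J"
  shows "det (border k h 1 0 c :: 'a::field^'n::finite^'n) = det h"
proof -
  define u where "u = c + axis k 1"
  have ck: "c$k = 0" using c k by (simp add: vec_supported_def)
  have hk: "h$k$j = (if k = j then 1 else 0)" "h$i$k = (if i = k then 1 else 0)" for i j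
    using h k by (auto simp: ident_outside_def)
  have "border k h 1 0 c = column_matrix k u ** h"
    by (auto simp: vec_eq_iff column_matrix_mult_nth u_def ck hk axis_def)
  hence "det (border k h 1 0 c) = det (column_matrix k u) * det h" by (simp add: det_mul)
  moreover have "det (column_matrix k u) = 1" by (simp add: det_column_matrix u_def ck axis_def)
  ultimately show ?thesis by simp
qed

lemma det_border_zero_column: "det (border k h 0 v 0 :: 'a::field^'n::finite^'n) = 0"
proof -
  have "column k (border k h 0 v 0) = 0" by (auto simp: column_def vec_eq_iff)
  thus ?thesis by (rule det_zero_column(2))
qed

lemma det_border_row_linear:
  assumes v: "v \<in> vec_supported J" and k: "k \<notin> J"
  shows "det (border k h 0 v c :: 'a::field^'n::finite^'n) = (\<Sum>j\<in>J. v$j * det (border k h 0 (axis j 1) c))"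
proof -
  define B where "B = border k h 0 0 c"
  have e0: "border k h 0 v c = (\<chi> i. if i = k then sum (\<lambda>j. v$j *s axis j 1) J else B$i)"
  proof (subst vec_eq_iff, intro allI, subst vec_eq_iff, intro allI)
    fix i l
    show "border k h 0 v c $ i $ l = (\<chi> i. if i = k then sum (\<lambda>j. v$j *s axis j 1) J else B$i) $ i $ l"
    proof (cases "i = k")
      case True
      have "(\<Sum>j\<in>J. v$j * (if l = j then 1 else 0)) = (\<Sum>j\<in>J. if l = j then v$j else 0)"
        by (rule sum.cong) auto
      also have "\<dots> = (if l \<in> J then v$l else 0)" by (simp add: sum.delta)
      finally show ?thesis using True v k by (auto simp: vec_supported_def axis_def)
    qed (simp add: B_def)
  qed
  have e1: "(\<chi> i. if i = k then axis j 1 else B$i) = border k h 0 (axis j 1) c" if "j \<in> J" for j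
    using that k by (auto simp: vec_eq_iff B_def axis_def)
  have "det (border k h 0 v c) = (\<Sum>j\<in>J. det (\<chi> i. if i = k then v$j *s axis j 1 else B$i))"
    unfolding e0 by (rule det_linear_row_sum) simp
  also have "\<dots> = (\<Sum>j\<in>J. v$j * det (\<chi> i. if i = k then axis j 1 else B$i))"
    by (intro sum.cong refl det_row_mul)
  also have "\<dots> = (\<Sum>j\<in>J. v$j * det (border k h 0 (axis j 1) c))"
    by (intro sum.cong refl) (simp add: e1)
  finally show ?thesis .
qed

lemma border_column_eq_0:
  assumes h: "h \<in> ident_outside J" and dh: "det h \<noteq> 0" and c: "c \<in> vec_supported J" and k: "k \<notin> J"
    and z: "\<forall>j\<in>J. det (border k h 0 (axis j 1) c :: 'a::field^'n::finite^'n) = 0"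
  shows "c = 0"
proof (rule ccontr)
  assume "c \<noteq> 0"
  then obtain i0 where ci0: "c$i0 \<noteq> 0" by (auto simp: vec_eq_iff)
  hence i0J: "i0 \<in> J" using c by (auto simp: vec_supported_def)
  hence i0k: "i0 \<noteq> k" using k by auto
  define B where "B = border k h 0 0 c"
  define w where "w = (\<chi> j. if j = k then 0 else inverse (c$i0) * B$i0$j)"
  have wV: "w \<in> vec_supported J"
  proof -
    have "w$j = 0" if "j \<notin> J" for j
    proof (cases "j = k")
      case False
      hence "B$i0$j = h$i0$j" using i0k by (simp add: B_def)
      also have "\<dots> = 0" using h that i0J by (auto simp: ident_outside_def)
      finally show ?thesis by (simp add: w_def)
    qed (simp add: w_def)
    thus ?thesis by (simp add: vec_supported_def)
  qed
  have "det (border k h 1 w c) = 1 * det (border k h 1 0 c) + det (border k h 0 w c)"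
    by (rule det_border_split)
  also have "det (border k h 0 w c) = 0"
    using det_border_row_linear[OF wV k, of h c] z by simp
  also have "det (border k h 1 0 c) = det h" by (rule det_border_1[OF h c k])
  finally have d1: "det (border k h 1 w c) = det h" by simp
  have "border k h 1 w c = (\<chi> i. if i = k then inverse (c$i0) *s B$i0 else B$i)"
    using i0k ci0 by (auto simp: vec_eq_iff B_def w_def)
  hence "det (border k h 1 w c) = inverse (c$i0) * det (\<chi> i. if i = k then B$i0 else B$i)"
    by (simp add: det_row_mul)
  also have "det (\<chi> i. if i = k then B$i0 else B$i) = 0"
    by (rule det_identical_rows[of k i0]) (use i0k in \<open>auto simp: row_def vec_eq_iff\<close>)
  finally show False using d1 dh by simp
qed

lemma partial_trace_border:
  assumes "k \<notin> J"
  shows "partial_trace (insert k J) (border k h x v c) = x + partial_trace J (h :: 'a::comm_monoid_add^'n::finite^'n)"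
proof -
  have "partial_trace J (border k h x v c) = partial_trace J h"
    using assms unfolding partial_trace_def by (intro sum.cong) auto
  thus ?thesis using assms by (simp add: partial_trace_def)
qed

lemma sum_ident_outside_insert:
  assumes k: "k \<notin> J"
  shows "(\<Sum>A\<in>ident_outside (insert k J). f A) =
    (\<Sum>h\<in>ident_outside J. \<Sum>x\<in>UNIV. \<Sum>v\<in>vec_supported J. \<Sum>c\<in>vec_supported J. f (border k h x v c :: 'a::{zero_neq_one,finite}^'n::finite^'n))"
proof -
  have "(\<Sum>A\<in>ident_outside (insert k J). f A) = (\<Sum>t\<in>ident_outside J \<times> UNIV \<times> vec_supported J \<times> vec_supported J. f ((\<lambda>(h,x,v,c). border k h x v c) t))"
    using sum.reindex_bij_betw[OF bij_betw_border[OF k], of f] by simp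
  also have "\<dots> = (\<Sum>h\<in>ident_outside J. \<Sum>x\<in>UNIV. \<Sum>v\<in>vec_supported J. \<Sum>c\<in>vec_supported J. f (border k h x v c))"
    by (simp add: sum.cartesian_product split_def)
  finally show ?thesis .
qed

lemma ident_outside_empty: "ident_outside {} = {mat 1 :: 'a::zero_neq_one^'n::finite^'n}"
  by (auto simp: ident_outside_def mat_def vec_eq_iff)

lemma ident_outside_UNIV: "ident_outside UNIV = (UNIV :: ('a::zero_neq_one^'n::finite^'n) set)"
  by (auto simp: ident_outside_def)

definition scale_mat :: "'a::field \<Rightarrow> 'a^'n::finite^'n \<Rightarrow> 'a^'n^'n" where
  "scale_mat a g = (\<chi> i j. a * g$i$j)"

lemma det_scale_mat: "det (scale_mat a g) = a ^ CARD('n) * det (g :: 'a::field^'n::finite^'n)"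
proof -
  have "scale_mat a g = (\<chi> i. (\<lambda>_. a) i *s g$i)" by (simp add: scale_mat_def vec_eq_iff)
  hence "det (scale_mat a g) = (\<Prod>i\<in>(UNIV::'n set). a) * det (\<chi> i. g$i)" by (simp add: det_rows_mul)
  thus ?thesis by simp
qed

lemma trace_scale_mat: "trace (scale_mat a g) = a * trace (g :: 'a::field^'n::finite^'n)"
  by (simp add: scale_mat_def trace_def sum_distrib_left)

lemma scale_mat_inverse: "a \<noteq> 0 \<Longrightarrow> scale_mat (inverse a) (scale_mat a g) = (g :: 'a::field^'n::finite^'n)"
  by (simp add: scale_mat_def vec_eq_iff)

section \<open>The order of the special linear group\<close>

definition SL_on :: "'n::finite set \<Rightarrow> ('a::field^'n^'n) set" where
  "SL_on I = {A \<in> ident_outside I. det A = 1}"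

lemma column_mult_left: "column k (X ** A) = X *v column k (A :: 'a::semiring_1^'n::finite^'n)"
  by (simp add: vec_eq_iff column_def matrix_vector_mult_def matrix_mult_nth)

lemma matrix_vector_mult_axis: "X *v axis k 1 = column k (X :: 'a::semiring_1^'n::finite^'n)"
  by (simp add: vec_eq_iff column_def matrix_vector_mult_def axis_def sum_delta_mult_right)

lemma det_border_column_0:
  assumes "h \<in> ident_outside J" and "k \<notin> J"
  shows "det (border k h 1 v 0 :: 'a::field^'n::finite^'n) = det h"
proof -
  have "(0::'a^'n) \<in> vec_supported J" by (simp add: vec_supported_def)
  thus ?thesis
    using det_border_split[of k h 1 v 0] det_border_1[OF assms(1) _ assms(2)] det_border_zero_column[of k h v]
    by simp
qed

lemma column_border_eq_axis:
  assumes "c \<in> vec_supported J" and "k \<notin> J"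
  shows "column k (border k h x v c) = axis k 1 \<longleftrightarrow> x = 1 \<and> c = (0::'a::zero_neq_one^'n::finite)"
  using assms by (auto simp: column_def axis_def vec_eq_iff vec_supported_def)

lemma card_SL_on_insert_column_axis:
  fixes k :: "'n::finite" and J :: "'n set"
  assumes k: "k \<notin> J"
  shows "card {A \<in> (SL_on (insert k J) :: ('a::{field,finite}^'n^'n) set). column k A = axis k 1}
           = CARD('a) ^ card J * card (SL_on J :: ('a^'n^'n) set)"
proof -
  let ?b = "\<lambda>(h,x,v,c). border k h x v c :: 'a^'n^'n"
  let ?T = "ident_outside J \<times> UNIV \<times> vec_supported J \<times> (vec_supported J :: ('a^'n) set)"
  let ?D = "(SL_on J :: ('a^'n^'n) set) \<times> {1::'a} \<times> (vec_supported J :: ('a^'n) set) \<times> {0::'a^'n}"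
  have "?b ` ?T = ident_outside (insert k J)" by (rule bij_betw_imp_surj_on[OF bij_betw_border[OF k]])
  hence "{A \<in> SL_on (insert k J). column k A = axis k 1} =
      {A \<in> ?b ` ?T. det A = 1 \<and> column k A = axis k 1}" by (auto simp: SL_on_def)
  also have "\<dots> = ?b ` {t \<in> ?T. det (?b t) = 1 \<and> column k (?b t) = axis k 1}" by blast
  also have "{t \<in> ?T. det (?b t) = 1 \<and> column k (?b t) = axis k 1} = ?D"
    using k by (auto simp: SL_on_def column_border_eq_axis det_border_column_0 vec_supported_def)
  finally have eq: "{A \<in> SL_on (insert k J). column k A = axis k 1} = ?b ` ?D" .
  have "?D \<subseteq> ?T" by (auto simp: SL_on_def vec_supported_def)
  hence "inj_on ?b ?D" using bij_betw_imp_inj_on[OF bij_betw_border[OF k]] inj_on_subset by blast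
  hence "card (?b ` ?D) = card (SL_on J :: ('a^'n^'n) set) * card (vec_supported J :: ('a^'n) set)"
    by (simp add: card_image card_cartesian_product)
  thus ?thesis unfolding eq by (simp add: card_vec_supported)
qed

lemma column_matrix_ident_outside:
  assumes "k \<in> I" "u \<in> vec_supported I"
  shows "column_matrix k u \<in> ident_outside I"
  using assms by (auto simp: ident_outside_def vec_supported_def)

lemma column_matrix_vector_mult:
  fixes m :: "'n::finite"
  shows "column_matrix m u *v x = (\<chi> i. u$i * x$m + (if i = m then 0 else x$i :: 'a::semiring_1))"
proof (subst vec_eq_iff, intro allI)
  fix i :: 'n
  have "(column_matrix m u *v x) $ i = (\<Sum>l\<in>UNIV. column_matrix m u $ i $ l * x$l)" by (simp add: matrix_vector_mult_def)
  also have "\<dots> = column_matrix m u $ i $ m * x$m + (\<Sum>l\<in>UNIV-{m}. column_matrix m u $ i $ l * x$l)"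
    by (subst sum.remove[of UNIV m]) auto
  also have "(\<Sum>l\<in>UNIV-{m}. column_matrix m u $ i $ l * x$l) = (\<Sum>l\<in>UNIV-{m}. if l = i then x$l else 0)"
    by (rule sum.cong) auto
  also have "\<dots> = (if i = m then 0 else x$i)" by (simp add: sum.delta')
  finally show "(column_matrix m u *v x) $ i = (\<chi> i. u$i * x$m + (if i = m then 0 else x$i)) $ i" by simp
qed

lemma column_column_matrix: "column k (column_matrix k u) = u"
  by (simp add: column_def vec_eq_iff)

lemma column_column_matrix_other: "m \<noteq> k \<Longrightarrow> column k (column_matrix m u) = axis k (1::'a::zero_neq_one)"
  by (auto simp: column_def vec_eq_iff axis_def)

text \<open>\<open>SL_on I\<close> acts transitively on the nonzero vectors supported in \<open>I\<close> as soon as \<open>|I| \<ge> 2\<close>,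
  so all nonempty fibres of \<open>A \<mapsto> column k A\<close> have the same size.\<close>

lemma exists_SL_on_column:
  fixes k m :: "'n::finite" and I :: "'n set" and v :: "'a::field^'n"
  assumes kI: "k \<in> I" and mI: "m \<in> I" and mk: "m \<noteq> k" and vI: "v \<in> vec_supported I" and v0: "v \<noteq> 0"
  shows "\<exists>E\<in>ident_outside I. det E = 1 \<and> column k E = v"
proof (cases "v$k = 0")
  case False
  define w where "w = inverse (v$k) *s (axis m 1 :: 'a^'n)"
  have wI: "w \<in> vec_supported I" using mI by (auto simp: vec_supported_def w_def axis_def)
  define E where "E = column_matrix k v ** column_matrix m w"
  have "E \<in> ident_outside I" unfolding E_def by (intro ident_outside_mult column_matrix_ident_outside kI vI mI wI)
  moreover have "det E = 1" using False by (simp add: E_def det_mul det_column_matrix w_def axis_def)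
  moreover have "column k E = v"
    using mk by (simp add: E_def column_mult_left column_column_matrix_other matrix_vector_mult_axis column_column_matrix)
  ultimately show ?thesis by blast
next
  case True
  obtain m' where vm: "v$m' \<noteq> 0" using v0 by (auto simp: vec_eq_iff)
  have m'I: "m' \<in> I" using vm vI by (auto simp: vec_supported_def)
  have m'k: "m' \<noteq> k" using vm True by auto
  define v' where "v' = v + axis k 1"
  define u where "u = axis m' 1 - inverse (v$m') *s (axis k 1 :: 'a^'n)"
  have v'I: "v' \<in> vec_supported I" using vI kI by (auto simp: vec_supported_def v'_def axis_def)
  have uI: "u \<in> vec_supported I" using kI m'I by (auto simp: vec_supported_def u_def axis_def)
  define E where "E = column_matrix m' u ** column_matrix k v'"
  have "E \<in> ident_outside I" unfolding E_def by (intro ident_outside_mult column_matrix_ident_outside kI m'I v'I uI)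
  moreover have "det E = 1" using True m'k by (simp add: E_def det_mul det_column_matrix u_def v'_def axis_def)
  moreover have "column k E = v"
  proof -
    have "column k E = column_matrix m' u *v v'" by (simp add: E_def column_mult_left column_column_matrix)
    also have "\<dots> = v"
      using True m'k vm by (auto simp: column_matrix_vector_mult vec_eq_iff u_def v'_def axis_def)
    finally show ?thesis .
  qed
  ultimately show ?thesis by blast
qed

lemma card_SL_on_column_eq:
  fixes k m :: "'n::finite" and I :: "'n set" and v :: "'a::field^'n"
  assumes kI: "k \<in> I" and mI: "m \<in> I" and mk: "m \<noteq> k" and vI: "v \<in> vec_supported I" and v0: "v \<noteq> 0"
  shows "card {A \<in> SL_on I. column k A = v} = card {A \<in> SL_on I. column k A = axis k (1::'a)}"
proof -
  obtain E where EI: "E \<in> ident_outside I" and dE: "det E = 1" and cE: "column k E = v"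
    using exists_SL_on_column[OF kI mI mk vI v0] by blast
  have "invertible E" using dE by (simp add: invertible_det_nz)
  then obtain F where EF: "E ** F = mat 1" and FE: "F ** E = mat 1" by (auto simp: invertible_def)
  have FI: "F \<in> ident_outside I" by (rule ident_outside_inverse[OF EI EF FE])
  have dF: "det F = 1" using arg_cong[OF EF, of det] dE by (simp add: det_mul)
  have "bij_betw (\<lambda>A. E ** A) {A \<in> SL_on I. column k A = axis k 1} {A \<in> SL_on I. column k A = v}"
  proof (rule bij_betwI[where g="\<lambda>B. F ** B"])
    show "(\<lambda>A. E ** A) \<in> {A \<in> SL_on I. column k A = axis k 1} \<rightarrow> {A \<in> SL_on I. column k A = v}"
      using EI dE cE by (auto simp: SL_on_def ident_outside_mult det_mul column_mult_left matrix_vector_mult_axis)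
    show "(\<lambda>B. F ** B) \<in> {A \<in> SL_on I. column k A = v} \<rightarrow> {A \<in> SL_on I. column k A = axis k 1}"
    proof
      fix B assume B: "B \<in> {A \<in> SL_on I. column k A = v}"
      have "column k (F ** B) = F *v (E *v axis k 1)" using B cE by (simp add: column_mult_left matrix_vector_mult_axis)
      also have "\<dots> = axis k 1" by (simp add: matrix_vector_mul_assoc FE)
      finally show "F ** B \<in> {A \<in> SL_on I. column k A = axis k 1}"
        using B FI dF by (auto simp: SL_on_def ident_outside_mult det_mul)
    qed
    show "F ** (E ** A) = A" for A by (simp add: matrix_mul_assoc FE)
    show "E ** (F ** B) = B" for B by (simp add: matrix_mul_assoc EF)
  qed
  from bij_betw_same_card[OF this] show ?thesis by (rule sym)
qed

lemma card_SL_on_eq_column_axis: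
  fixes k m :: "'n::finite" and I :: "'n set"
  assumes kI: "k \<in> I" and mI: "m \<in> I" and mk: "m \<noteq> k"
  shows "card (SL_on I :: ('a::{field,finite}^'n^'n) set) =
           (CARD('a) ^ card I - 1) * card {A \<in> (SL_on I :: ('a^'n^'n) set). column k A = axis k 1}"
proof -
  let ?S = "SL_on I :: ('a^'n^'n) set"
  let ?V = "(vec_supported I :: ('a^'n) set) - {0}"
  have sub: "(\<lambda>A. column k A) ` ?S \<subseteq> ?V"
  proof
    fix w assume "w \<in> (\<lambda>A. column k A) ` ?S"
    then obtain A where A: "A \<in> ?S" and w: "w = column k A" by auto
    have "w \<in> vec_supported I" using A kI by (auto simp: SL_on_def ident_outside_def vec_supported_def w column_def)
    moreover have "w \<noteq> 0"
    proof
      assume "w = 0" hence "column k A = 0" using w by simp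
      hence "det A = 0" by (rule det_zero_column(2))
      thus False using A by (simp add: SL_on_def)
    qed
    ultimately show "w \<in> ?V" by simp
  qed
  have "card ?S = (\<Sum>A\<in>?S. 1)" by simp
  also have "\<dots> = (\<Sum>w\<in>?V. \<Sum>A\<in>{A. A \<in> ?S \<and> column k A = w}. 1)"
    by (rule sum.group[symmetric]) (use sub in auto)
  also have "\<dots> = (\<Sum>w\<in>?V. card {A \<in> ?S. column k A = axis k 1})"
    by (intro sum.cong refl) (use card_SL_on_column_eq[OF kI mI mk] in auto)
  also have "\<dots> = card ?V * card {A \<in> ?S. column k A = axis k 1}" by simp
  also have "card ?V = CARD('a) ^ card I - 1"
  proof -
    have z: "(0::'a^'n) \<in> vec_supported I" by (simp add: vec_supported_def)
    show ?thesis by (simp add: card_Diff_subset z card_vec_supported)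
  qed
  finally show ?thesis .
qed

lemma SL_on_singleton: "SL_on {k} = {mat 1 :: 'a::field^'n::finite^'n}"
proof (intro equalityI subsetI)
  fix A :: "'a^'n^'n" assume "A \<in> SL_on {k}"
  hence A: "A \<in> ident_outside {k}" and "det A = 1" by (auto simp: SL_on_def)
  have diag: "A$i$j = 0" if "i \<noteq> j" for i j
    using A that unfolding ident_outside_def by (cases "i = k") auto
  have "det A = A$k$k * (\<Prod>i\<in>UNIV-{k}. A$i$i)"
    by (simp add: det_diagonal[OF diag] prod.remove[of UNIV k])
  also have "(\<Prod>i\<in>UNIV-{k}. A$i$i) = 1" using A by (intro prod.neutral) (auto simp: ident_outside_def)
  finally have "A$k$k = 1" using \<open>det A = 1\<close> by simp
  hence "A $ i $ j = mat 1 $ i $ j" for i j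
    using A diag unfolding ident_outside_def mat_def by (cases "i = j"; cases "i = k") auto
  thus "A \<in> {mat 1}" by (simp add: vec_eq_iff)
qed (auto simp: SL_on_def ident_outside_def, auto simp: mat_def)

lemma card_SL_on:
  fixes I :: "'n::finite set"
  assumes "I \<noteq> {}"
  shows "card (SL_on I :: ('a::{field,finite}^'n^'n) set) =
     CARD('a) ^ (card I choose 2) * (\<Prod>j=2..card I. CARD('a) ^ j - 1)"
  using finite[of I] assms
proof (induction I rule: finite_ne_induct)
  case (singleton k)
  then show ?case by (simp add: SL_on_singleton binomial_eq_0)
next
  case (insert k J)
  obtain m where m: "m \<in> J" using insert by auto
  obtain c where c: "card J = Suc c" using insert by (cases "card J") auto
  have "card (SL_on (insert k J) :: ('a^'n^'n) set) =
      (CARD('a) ^ Suc (card J) - 1) * (CARD('a) ^ card J * card (SL_on J :: ('a^'n^'n) set))"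
    using card_SL_on_eq_column_axis[of k "insert k J" m, where 'a='a] m insert
      card_SL_on_insert_column_axis[of k J, where 'a='a] by auto
  moreover have "Suc (card J) choose 2 = card J + (card J choose 2)" by (simp add: c numeral_2_eq_2)
  moreover have "(\<Prod>j=2..Suc (card J). CARD('a) ^ j - 1) =
      (\<Prod>j=2..card J. CARD('a) ^ j - 1) * (CARD('a) ^ Suc (card J) - 1)"
    by (simp add: c prod.nat_ivl_Suc')
  ultimately show ?case using insert by (simp add: power_add mult_ac)
qed

lemma card_SL:
  "card (SL :: ('a::{field,finite}^'n::finite^'n) set) =
     CARD('a) ^ (CARD('n) choose 2) * (\<Prod>j=2..CARD('n). CARD('a) ^ j - 1)"
proof -
  have "(SL :: ('a^'n^'n) set) = SL_on UNIV" by (simp add: SL_def SL_on_def ident_outside_UNIV)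
  thus ?thesis using card_SL_on[of "UNIV :: 'n set", where 'a='a] by simp
qed

lemma bij_betw_PiE_compose:
  assumes "bij_betw f A B"
  shows "bij_betw (\<lambda>\<alpha>. restrict (f \<circ> \<alpha>) I) (PiE I (\<lambda>_. A)) (PiE I (\<lambda>_. B))"
proof (rule bij_betwI[where g="\<lambda>\<beta>. restrict (inv_into A f \<circ> \<beta>) I"])
  show "(\<lambda>\<alpha>. restrict (f \<circ> \<alpha>) I) \<in> PiE I (\<lambda>_. A) \<rightarrow> PiE I (\<lambda>_. B)"
    using bij_betwE[OF assms] by auto
  show "(\<lambda>\<beta>. restrict (inv_into A f \<circ> \<beta>) I) \<in> PiE I (\<lambda>_. B) \<rightarrow> PiE I (\<lambda>_. A)"
    using bij_betwE[OF bij_betw_inv_into[OF assms]] by auto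
  show "restrict (inv_into A f \<circ> restrict (f \<circ> \<alpha>) I) I = \<alpha>" if "\<alpha> \<in> PiE I (\<lambda>_. A)" for \<alpha>
    using that bij_betw_inv_into_left[OF assms] by (auto simp: fun_eq_iff PiE_iff extensional_def)
  show "restrict (f \<circ> restrict (inv_into A f \<circ> \<beta>) I) I = \<beta>" if "\<beta> \<in> PiE I (\<lambda>_. B)" for \<beta>
    using that bij_betw_inv_into_right[OF assms] by (auto simp: fun_eq_iff PiE_iff extensional_def)
qed

lemma fact_mult_choose_Suc: "fact (Suc t) * (w choose Suc t) = fact t * (w choose t) * (w - t)"
proof -
  have "Suc t * (w choose Suc t) = (w - t) * (w choose t)"
    by (simp only: binomial_absorption binomial_absorb_comp)
  thus ?thesis by (simp only: fact_Suc of_nat_id mult_ac)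
qed

lemma mult_fact_mult_choose: "w * (fact t * (w choose t)) = fact (Suc t) * (w choose Suc t) + t * (fact t * (w choose t) :: nat)"
proof (cases "t \<le> w")
  case True
  let ?X = "fact t * (w choose t) :: nat"
  have "(w - t) * ?X + t * ?X = ((w - t) + t) * ?X" by (rule add_mult_distrib[symmetric])
  also have "\<dots> = w * ?X" using True by simp
  finally have "w * ?X = ?X * (w - t) + t * ?X" by (simp only: mult.commute)
  thus ?thesis by (simp only: fact_mult_choose_Suc)
next
  case False
  hence z: "w choose t = 0" "w choose Suc t = 0" by simp_all
  show ?thesis by (simp only: z mult_zero_right add_0_right)
qed

lemma power_eq_sum_Stirling_fact_choose: "(w::nat) ^ h = (\<Sum>t\<le>h. Stirling h t * (fact t * (w choose t)))"
proof (induction h)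
  case 0 then show ?case by simp
next
  case (Suc h)
  define P where "P = (\<lambda>t. fact t * (w choose t) :: nat)"
  have IH: "w ^ h = (\<Sum>t\<le>h. Stirling h t * P t)" using Suc.IH by (simp add: P_def)
  have wP: "w * P t = P (Suc t) + t * P t" for t unfolding P_def by (rule mult_fact_mult_choose)
  have "w ^ Suc h = w * (\<Sum>t\<le>h. Stirling h t * P t)" by (simp only: power_Suc IH)
  also have "\<dots> = (\<Sum>t\<le>h. Stirling h t * (w * P t))" by (simp add: sum_distrib_left mult.left_commute)
  also have "\<dots> = (\<Sum>t\<le>h. Stirling h t * P (Suc t) + t * Stirling h t * P t)"
    by (intro sum.cong refl) (simp add: wP distrib_left mult.left_commute)
  also have "\<dots> = (\<Sum>t\<le>h. Stirling h t * P (Suc t)) + (\<Sum>t\<le>h. t * Stirling h t * P t)"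
    by (rule sum.distrib)
  also have "(\<Sum>t\<le>h. t * Stirling h t * P t) = (\<Sum>t\<le>h. Suc t * Stirling h (Suc t) * P (Suc t))"
  proof -
    have "(\<Sum>t\<le>Suc h. t * Stirling h t * P t) = 0 * Stirling h 0 * P 0 + (\<Sum>t\<le>h. Suc t * Stirling h (Suc t) * P (Suc t))"
      by (rule sum.atMost_Suc_shift)
    moreover have "(\<Sum>t\<le>Suc h. t * Stirling h t * P t) = (\<Sum>t\<le>h. t * Stirling h t * P t)" by simp
    ultimately show ?thesis by simp
  qed
  also have "(\<Sum>t\<le>h. Stirling h t * P (Suc t)) + (\<Sum>t\<le>h. Suc t * Stirling h (Suc t) * P (Suc t)) =
             (\<Sum>t\<le>h. Stirling (Suc h) (Suc t) * P (Suc t))"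
    unfolding sum.distrib[symmetric] by (intro sum.cong refl) (simp add: distrib_right)
  also have "\<dots> = (\<Sum>t\<le>Suc h. Stirling (Suc h) t * P t)"
  proof -
    have "(\<Sum>t\<le>Suc h. Stirling (Suc h) t * P t) = Stirling (Suc h) 0 * P 0 + (\<Sum>t\<le>h. Stirling (Suc h) (Suc t) * P (Suc t))"
      by (rule sum.atMost_Suc_shift)
    thus ?thesis by (simp only: Stirling.simps mult_zero_left add_0_left)
  qed
  finally show ?case by (simp add: P_def)
qed


lemma card_supersets:
  fixes S U :: "'b set"
  assumes S: "finite S" and U: "U \<subseteq> S"
  shows "card {T. T \<subseteq> S \<and> card T = t \<and> U \<subseteq> T} =
          (if card U \<le> t then (card S - card U) choose (t - card U) else 0)"
proof (cases "card U \<le> t")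
  case True
  have fU: "finite U" using S U finite_subset by auto
  have "bij_betw (\<lambda>T. T - U) {T. T \<subseteq> S \<and> card T = t \<and> U \<subseteq> T} {V. V \<subseteq> S - U \<and> card V = t - card U}"
  proof (rule bij_betwI[where g="\<lambda>V. V \<union> U"])
    show "(\<lambda>T. T - U) \<in> {T. T \<subseteq> S \<and> card T = t \<and> U \<subseteq> T} \<rightarrow> {V. V \<subseteq> S - U \<and> card V = t - card U}"
      using fU by (auto simp: card_Diff_subset)
    show "(\<lambda>V. V \<union> U) \<in> {V. V \<subseteq> S - U \<and> card V = t - card U} \<rightarrow> {T. T \<subseteq> S \<and> card T = t \<and> U \<subseteq> T}"
    proof
      fix V assume V: "V \<in> {V. V \<subseteq> S - U \<and> card V = t - card U}"
      have fV: "finite V" using V S finite_subset by auto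
      have "card (V \<union> U) = card V + card U" using V fV fU by (intro card_Un_disjoint) auto
      thus "V \<union> U \<in> {T. T \<subseteq> S \<and> card T = t \<and> U \<subseteq> T}" using V U True by auto
    qed
  qed auto
  hence "card {T. T \<subseteq> S \<and> card T = t \<and> U \<subseteq> T} = card {V. V \<subseteq> S - U \<and> card V = t - card U}"
    by (rule bij_betw_same_card)
  also have "\<dots> = card (S - U) choose (t - card U)" by (rule n_subsets) (use S in auto)
  finally show ?thesis using True U S by (simp add: card_Diff_subset fU)
next
  case False
  have e: "{T. T \<subseteq> S \<and> card T = t \<and> U \<subseteq> T} = {}"
  proof (rule ccontr)
    assume "{T. T \<subseteq> S \<and> card T = t \<and> U \<subseteq> T} \<noteq> {}"
    then obtain T where "T \<subseteq> S" "card T = t" "U \<subseteq> T" by auto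
    hence "card U \<le> t" using S by (metis card_mono finite_subset)
    thus False using False by simp
  qed
  thus ?thesis unfolding e using False by simp
qed

lemma sum_choose_exchange:
  fixes F G :: "nat \<Rightarrow> int"
  shows "(\<Sum>t\<le>h. F t * (\<Sum>i\<in>{0..M}. G i * (if i \<le> t then int ((M - i) choose (t - i)) else 0))) =
         (\<Sum>i=0..min M h. G i * (\<Sum>t=i..h. F t * (if t \<le> M then int ((M - i) choose (M - t)) else 0)))"
proof -
  have bin: "int ((M - i) choose (t - i)) = (if t \<le> M then int ((M - i) choose (M - t)) else 0)"
    if "i \<le> t" "i \<le> M" for i t
  proof (cases "t \<le> M")
    case True
    have "(M - i) choose (t - i) = (M - i) choose ((M - i) - (t - i))"
      using True that by (intro binomial_symmetric) simp
    also have "(M - i) - (t - i) = M - t" using True that by simp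
    finally show ?thesis using True by simp
  next
    case False
    hence "M - i < t - i" using that by arith
    thus ?thesis using False by simp
  qed
  have "(\<Sum>t\<le>h. F t * (\<Sum>i\<in>{0..M}. G i * (if i \<le> t then int ((M - i) choose (t - i)) else 0))) =
        (\<Sum>i\<in>{0..M}. \<Sum>t\<le>h. G i * (if i \<le> t then F t * int ((M - i) choose (t - i)) else 0))"
    by (subst sum.swap) (simp add: sum_distrib_left mult_ac if_distrib cong: if_cong)
  also have "\<dots> = (\<Sum>i\<in>{0..M}. G i * (\<Sum>t=i..h. F t * (if t \<le> M then int ((M - i) choose (M - t)) else 0)))"
  proof (intro sum.cong refl)
    fix i assume iM: "i \<in> {0..M}"
    have "(\<Sum>t\<le>h. G i * (if i \<le> t then F t * int ((M - i) choose (t - i)) else 0)) =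
          G i * (\<Sum>t\<le>h. if i \<le> t then F t * int ((M - i) choose (t - i)) else 0)"
      by (simp add: sum_distrib_left)
    also have "(\<Sum>t\<le>h. if i \<le> t then F t * int ((M - i) choose (t - i)) else 0) =
               (\<Sum>t\<in>{t \<in> {..h}. i \<le> t}. F t * int ((M - i) choose (t - i)))"
      by (rule sum.inter_filter[symmetric]) simp
    also have "{t \<in> {..h}. i \<le> t} = {i..h}" by auto
    also have "(\<Sum>t\<in>{i..h}. F t * int ((M - i) choose (t - i))) =
               (\<Sum>t=i..h. F t * (if t \<le> M then int ((M - i) choose (M - t)) else 0))"
      using iM by (intro sum.cong refl) (simp add: bin)
    finally show "(\<Sum>t\<le>h. G i * (if i \<le> t then F t * int ((M - i) choose (t - i)) else 0)) =
       G i * (\<Sum>t=i..h. F t * (if t \<le> M then int ((M - i) choose (M - t)) else 0))" .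
  qed
  also have "\<dots> = (\<Sum>i=0..min M h. G i * (\<Sum>t=i..h. F t * (if t \<le> M then int ((M - i) choose (M - t)) else 0)))"
    by (rule sum.mono_neutral_right) auto
  finally show ?thesis .
qed

lemma binomial_diff_power:
  "(x - y) ^ h = (\<Sum>i\<le>h. int (h choose i) * (-1)^i * y ^ i * x ^ (h - i))"
  for x y :: int
  using binomial_ring[of "- y" x h] by (simp add: power_minus[of y] mult_ac)

lemma alternating_sum_solve_last:
  fixes X :: "nat \<Rightarrow> int"
  assumes h: "h > 0" and e: "(\<Sum>i\<le>h. (-1)^i * X i) = Q"
  shows "X h = (\<Sum>i=0..h-1. (-1)^(h+i+1) * X i) + (-1)^h * Q"
proof -
  obtain h' where h': "h = Suc h'" using h by (cases h) auto
  have "(\<Sum>i\<le>h. (-1)^i * X i) = (\<Sum>i<h. (-1)^i * X i) + (-1)^h * X h"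
    unfolding h' by (simp add: lessThan_Suc_atMost[symmetric])
  hence "(-1)^h * X h = Q - (\<Sum>i<h. (-1)^i * X i)" using e by simp
  hence "(-1)^h * ((-1)^h * X h) = (-1)^h * Q - (\<Sum>i<h. (-1)^h * ((-1)^i * X i))"
    by (simp add: right_diff_distrib sum_distrib_left)
  moreover have "(-1::int)^h * ((-1)^h * X h) = X h"
    by (simp add: mult.assoc[symmetric] power_add[symmetric])
  moreover have "(\<Sum>i<h. (-1)^h * ((-1)^i * X i)) = - (\<Sum>i=0..h-1. (-1)^(h+i+1) * X i)"
  proof -
    have "{0..h-1} = {..<h}" using h by auto
    moreover have "(\<Sum>i<h. (-1)^h * ((-1)^i * X i)) = (\<Sum>i<h. - ((-1::int)^(h+i+1) * X i))"
      by (intro sum.cong refl) (simp add: power_add)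
    ultimately show ?thesis by (simp only: sum_negf)
  qed
  ultimately show ?thesis by simp
qed
section \<open>The weight distribution of the code\<close>

definition zero_trace_subsets :: "nat \<Rightarrow> ('a::{field,finite}^'n::finite^'n) set set" where
  "zero_trace_subsets i = {U. U \<subseteq> SL \<and> card U = i \<and> (\<Sum>g\<in>U. trace g) = 0}"

lemma sum_binary_weights:
  assumes "finite S" and "\<forall>g. u g \<in> {0,1}"
  shows "(\<Sum>g\<in>S. of_nat (u g) * f g) = (\<Sum>g\<in>{g\<in>S. u g \<noteq> 0}. f g :: 'a::semiring_1)"
proof -
  have "(\<Sum>g\<in>S. of_nat (u g) * f g) = (\<Sum>g\<in>S. if u g \<noteq> 0 then f g else 0)"
    using assms by (intro sum.cong refl) (metis empty_iff insert_iff mult_1 mult_zero_left of_nat_0 of_nat_1)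
  thus ?thesis using \<open>finite S\<close> by (simp add: sum.inter_filter)
qed

text \<open>A codeword is the indicator function of its support, a subset of \<open>SL\<close> whose traces sum to 0.\<close>

lemma weight_dist_eq_card_zero_trace_subsets:
  "weight_dist TYPE('a::{field,finite}^'n::finite^'n) i = card (zero_trace_subsets i :: ('a^'n^'n) set set)"
proof -
  let ?supp = "\<lambda>u::('a^'n^'n) \<Rightarrow> nat. {g\<in>SL. u g \<noteq> 0}"
  let ?ind = "\<lambda>(U::('a^'n^'n) set) g. if g \<in> U then 1 else 0 :: nat"
  have "bij_betw ?supp {u \<in> (SL_code :: (('a^'n^'n) \<Rightarrow> nat) set). hweight u = i} (zero_trace_subsets i)"
  proof (rule bij_betwI[where g="?ind"])
    show "?supp \<in> {u \<in> SL_code. hweight u = i} \<rightarrow> zero_trace_subsets i"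
    proof
      fix u assume "u \<in> {u \<in> (SL_code :: (('a^'n^'n) \<Rightarrow> nat) set). hweight u = i}"
      hence "\<forall>g. u g \<in> {0,1}" "(\<Sum>g\<in>SL. of_nat (u g) * trace g) = (0::'a)" "hweight u = i"
        by (auto simp: SL_code_def)
      thus "?supp u \<in> zero_trace_subsets i"
        using sum_binary_weights[of SL u trace] by (simp add: zero_trace_subsets_def hweight_def)
    qed
    show "?ind \<in> zero_trace_subsets i \<rightarrow> {u \<in> SL_code. hweight u = i}"
    proof
      fix U assume U: "U \<in> (zero_trace_subsets i :: ('a^'n^'n) set set)"
      have supp: "?supp (?ind U) = U" using U by (auto simp: zero_trace_subsets_def)
      have "(\<Sum>g\<in>SL. of_nat (?ind U g) * trace g) = (\<Sum>g\<in>U. trace g :: 'a)"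
        using sum_binary_weights[of SL "?ind U" trace] supp by simp
      thus "?ind U \<in> {u \<in> SL_code. hweight u = i}"
        using U supp by (auto simp: SL_code_def hweight_def zero_trace_subsets_def)
    qed
    show "?ind (?supp u) = u" if "u \<in> {u \<in> SL_code. hweight u = i}" for u
    proof
      fix g
      have "u g \<in> {0,1}" and "g \<notin> SL \<Longrightarrow> u g = 0" using that by (auto simp: SL_code_def)
      thus "?ind (?supp u) g = u g" by auto
    qed
    show "?supp (?ind U) = U" if "U \<in> zero_trace_subsets i" for U
      using that by (auto simp: zero_trace_subsets_def)
  qed
  thus ?thesis unfolding weight_dist_def by (rule bij_betw_same_card)
qed

definition trace_count :: "('a::{field,finite}^'n::finite^'n) set \<Rightarrow> 'a \<Rightarrow> nat" where
  "trace_count U = (\<lambda>\<beta>. card {g\<in>U. trace g = \<beta>})"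

definition trace_profiles :: "nat \<Rightarrow> ('a::{field,finite} \<Rightarrow> nat) set" where
  "trace_profiles i = {\<nu>. (\<Sum>\<beta>\<in>UNIV. \<nu> \<beta>) = i \<and> (\<Sum>\<beta>\<in>UNIV. of_nat (\<nu> \<beta>) * \<beta>) = 0}"

lemma card_eq_sum_trace_count:
  "card (U :: ('a::{field,finite}^'n::finite^'n) set) = (\<Sum>\<beta>\<in>UNIV. trace_count U \<beta>)"
  using sum.group[of U UNIV trace "\<lambda>_. 1::nat"] by (simp add: trace_count_def)

lemma sum_trace_eq_trace_count:
  fixes U :: "('a::{field,finite}^'n::finite^'n) set"
  shows "(\<Sum>g\<in>U. trace g) = (\<Sum>\<beta>\<in>UNIV. of_nat (trace_count U \<beta>) * \<beta>)"
  using sum.group[of U UNIV trace trace] by (simp add: trace_count_def)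

lemma finite_trace_profiles: "finite (trace_profiles i :: ('a::{field,finite} \<Rightarrow> nat) set)"
proof -
  have "trace_profiles i \<subseteq> PiE UNIV (\<lambda>_::'a. {0..i})"
  proof
    fix \<nu> :: "'a \<Rightarrow> nat" assume "\<nu> \<in> trace_profiles i"
    hence s: "(\<Sum>\<beta>\<in>UNIV. \<nu> \<beta>) = i" by (simp add: trace_profiles_def)
    have "\<nu> \<beta> \<le> i" for \<beta> using member_le_sum[of \<beta> UNIV \<nu>] s by simp
    thus "\<nu> \<in> PiE UNIV (\<lambda>_. {0..i})" by (simp add: PiE_UNIV_domain)
  qed
  moreover have "finite (PiE UNIV (\<lambda>_::'a. {0..i}))" by (rule finite_PiE) auto
  ultimately show ?thesis by (rule finite_subset)
qed

lemma card_subsets_trace_count: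
  "card {U. U \<subseteq> (SL :: ('a::{field,finite}^'n::finite^'n) set) \<and> trace_count U = \<nu>} =
     (\<Prod>\<beta>\<in>UNIV. card {g \<in> (SL :: ('a^'n^'n) set). trace g = \<beta>} choose \<nu> \<beta>)"
proof -
  let ?T = "\<lambda>\<beta>. {g \<in> (SL :: ('a^'n^'n) set). trace g = \<beta>}"
  let ?P = "PiE UNIV (\<lambda>\<beta>. {S. S \<subseteq> ?T \<beta> \<and> card S = \<nu> \<beta>})"
  have "bij_betw (\<lambda>U \<beta>. {g\<in>U. trace g = \<beta>}) {U. U \<subseteq> SL \<and> trace_count U = \<nu>} ?P"
  proof (rule bij_betwI[where g="\<lambda>F. \<Union>\<beta>. F \<beta>"])
    show "(\<lambda>U \<beta>. {g\<in>U. trace g = \<beta>}) \<in> {U. U \<subseteq> SL \<and> trace_count U = \<nu>} \<rightarrow> ?P"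
      by (auto simp: PiE_UNIV_domain trace_count_def)
    have fibres: "{g \<in> (\<Union>\<beta>. F \<beta>). trace g = \<beta>} = F \<beta>" if "F \<in> ?P" for F \<beta>
      using that by (fastforce simp: PiE_UNIV_domain)
    show "(\<lambda>F. \<Union>\<beta>. F \<beta>) \<in> ?P \<rightarrow> {U. U \<subseteq> SL \<and> trace_count U = \<nu>}"
      using fibres by (fastforce simp: PiE_UNIV_domain trace_count_def)
    show "(\<lambda>\<beta>. {g \<in> (\<Union>\<beta>'. F \<beta>'). trace g = \<beta>}) = F" if "F \<in> ?P" for F
      using fibres[OF that] by auto
  qed auto
  hence "card {U. U \<subseteq> (SL :: ('a^'n^'n) set) \<and> trace_count U = \<nu>} = card ?P" by (rule bij_betw_same_card)
  also have "\<dots> = (\<Prod>\<beta>\<in>UNIV. card {S. S \<subseteq> ?T \<beta> \<and> card S = \<nu> \<beta>})" by (simp add: card_PiE)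
  also have "\<dots> = (\<Prod>\<beta>\<in>UNIV. card (?T \<beta>) choose \<nu> \<beta>)" by (simp add: n_subsets)
  finally show ?thesis .
qed

lemma card_zero_trace_subsets:
  "card (zero_trace_subsets i :: ('a::{field,finite}^'n::finite^'n) set set) =
     (\<Sum>\<nu>\<in>trace_profiles i. \<Prod>\<beta>\<in>UNIV. card {g \<in> (SL :: ('a^'n^'n) set). trace g = \<beta>} choose \<nu> \<beta>)"
proof -
  let ?S = "{U. U \<subseteq> (SL :: ('a^'n^'n) set) \<and> trace_count U \<in> trace_profiles i}"
  have CSeq: "zero_trace_subsets i = ?S"
  proof -
    have "U \<subseteq> SL \<Longrightarrow> (card U = i \<and> (\<Sum>g\<in>U. trace g) = 0) = (trace_count U \<in> trace_profiles i)" for U :: "('a^'n^'n) set"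
      using card_eq_sum_trace_count[of U] sum_trace_eq_trace_count[of U] by (auto simp: trace_profiles_def)
    thus ?thesis by (auto simp: zero_trace_subsets_def)
  qed
  have fS: "finite ?S" by simp
  have "(\<Sum>\<nu>\<in>trace_profiles i. \<Sum>U\<in>{x. x \<in> ?S \<and> trace_count x = \<nu>}. (1::nat)) = (\<Sum>U\<in>?S. 1)"
    by (rule sum.group[OF fS finite_trace_profiles]) auto
  hence "card ?S = (\<Sum>\<nu>\<in>trace_profiles i. card {x. x \<in> ?S \<and> trace_count x = \<nu>})" by simp
  also have "\<dots> = (\<Sum>\<nu>\<in>trace_profiles i. card {U. U \<subseteq> (SL :: ('a^'n^'n) set) \<and> trace_count U = \<nu>})"
    by (intro sum.cong refl arg_cong[where f=card]) auto
  finally show ?thesis unfolding CSeq card_subsets_trace_count .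
qed


definition signed_zero_trace_count :: "('a::semiring_1^'n::finite^'n) set \<Rightarrow> nat \<Rightarrow> int" where
  "signed_zero_trace_count S t = (\<Sum>T\<in>{T. T \<subseteq> S \<and> card T = t}.
      \<Sum>U\<in>Pow T. if (\<Sum>g\<in>U. trace g) = 0 then (-1) ^ card U else 0)"

text \<open>Each \<open>i\<close>-subset of \<open>SL\<close> lies in \<open>(N-i choose t-i)\<close> of the \<open>t\<close>-subsets.\<close>

lemma signed_zero_trace_count_SL:
  "signed_zero_trace_count (SL :: ('a::{field,finite}^'n::finite^'n) set) t =
    (\<Sum>i\<in>{0..card (SL :: ('a^'n^'n) set)}. (-1) ^ i * int (card (zero_trace_subsets i :: ('a^'n^'n) set set)) *
       (if i \<le> t then int ((card (SL :: ('a^'n^'n) set) - i) choose (t - i)) else 0))"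
proof -
  let ?S = "SL :: ('a^'n^'n) set"
  let ?N = "card ?S"
  let ?X = "{T. T \<subseteq> ?S \<and> card T = t}"
  let ?f = "\<lambda>U::('a^'n^'n) set. if (\<Sum>g\<in>U. trace g) = 0 then (-1::int) ^ card U else 0"
  let ?c = "\<lambda>i. if i \<le> t then int ((?N - i) choose (t - i)) else 0"
  have "signed_zero_trace_count ?S t = (\<Sum>T\<in>?X. \<Sum>U\<in>{U \<in> Pow ?S. U \<subseteq> T}. ?f U)"
    unfolding signed_zero_trace_count_def by (intro sum.cong refl arg_cong[where f="sum ?f"]) auto
  also have "\<dots> = (\<Sum>U\<in>Pow ?S. \<Sum>T\<in>{T \<in> ?X. U \<subseteq> T}. ?f U)"
    by (rule sum.swap_restrict) simp_all
  also have "\<dots> = (\<Sum>U\<in>Pow ?S. ?f U * ?c (card U))"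
    by (intro sum.cong refl) (simp add: card_supersets)
  also have "\<dots> = (\<Sum>i\<in>{0..?N}. \<Sum>U\<in>{U. U \<in> Pow ?S \<and> card U = i}. ?f U * ?c (card U))"
    by (rule sum.group[symmetric]) (auto simp: card_mono)
  also have "\<dots> = (\<Sum>i\<in>{0..?N}. (-1) ^ i * int (card (zero_trace_subsets i :: ('a^'n^'n) set set)) * ?c i)"
  proof (intro sum.cong refl)
    fix i
    have "(\<Sum>U\<in>{U. U \<in> Pow ?S \<and> card U = i}. ?f U * ?c (card U)) =
        (\<Sum>U\<in>{U. U \<in> Pow ?S \<and> card U = i}. if (\<Sum>g\<in>U. trace g) = 0 then (-1) ^ i * ?c i else 0)"
      by (intro sum.cong refl) auto
    also have "\<dots> = (\<Sum>U\<in>{U \<in> {U. U \<in> Pow ?S \<and> card U = i}. (\<Sum>g\<in>U. trace g) = 0}. (-1) ^ i * ?c i)"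
      by (rule sum.inter_filter[symmetric]) simp
    also have "{U \<in> {U. U \<in> Pow ?S \<and> card U = i}. (\<Sum>g\<in>U. trace g) = 0} = zero_trace_subsets i"
      by (auto simp: zero_trace_subsets_def)
    finally show "(\<Sum>U\<in>{U. U \<in> Pow ?S \<and> card U = i}. ?f U * ?c (card U)) =
        (-1) ^ i * int (card (zero_trace_subsets i :: ('a^'n^'n) set set)) * ?c i" by simp
  qed
  finally show ?thesis .
qed

lemma weight_dist_eq_sum_prod_choose:
  "weight_dist TYPE('a::{field,finite}^'n::finite^'n) i =
     (\<Sum>\<nu>\<in>{\<nu>::'a \<Rightarrow> nat. (\<Sum>\<beta>\<in>UNIV. \<nu> \<beta>) = i \<and> (\<Sum>\<beta>\<in>UNIV. of_nat (\<nu> \<beta>) * \<beta>) = 0}.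
        \<Prod>\<beta>\<in>UNIV. card {g \<in> (SL :: ('a^'n^'n) set). trace g = \<beta>} choose \<nu> \<beta>)"
  by (simp add: weight_dist_eq_card_zero_trace_subsets card_zero_trace_subsets trace_profiles_def)
section \<open>Additive characters of fields of order \<open>2^r\<close>\<close>

context
  fixes r :: nat
  assumes card_field: "CARD('a::{field,finite}) = 2^r" and r_pos: "r > 0"
begin

lemma char2_two_eq_0: "(2::'a) = 0"
proof -
  have bij: "bij_betw (\<lambda>x. x + 1) UNIV (UNIV::'a set)"
    by (auto simp: bij_betw_def inj_on_def intro!: image_eqI[where x="y - 1" for y])
  have "(\<Sum>x\<in>UNIV. x + 1) = (\<Sum>x\<in>(UNIV::'a set). x)"
    using sum.reindex_bij_betw[OF bij, of "\<lambda>x. x"] by simp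
  hence "of_nat (CARD('a)) = (0::'a)" by (simp add: sum.distrib)
  hence "(2::'a)^r = 0" using card_field by simp
  thus ?thesis by simp
qed

lemma char2_add_self: "(x::'a) + x = 0"
  using char2_two_eq_0 by (metis mult_2 mult_zero_left)

lemma char2_uminus: "- (x::'a) = x"
  using char2_add_self by (metis add_eq_0_iff)

lemma char2_power2_add: "((x::'a) + y)^2 = x^2 + y^2"
  using char2_two_eq_0 by (simp add: power2_sum)

lemma frobenius_iter_add: "((x::'a) + y)^(2^i) = x^(2^i) + y^(2^i)"
proof (induction i)
  case (Suc i)
  have "(x+y)^(2^Suc i) = ((x+y)^(2^i))^2" by (simp add: power_mult[symmetric] mult.commute)
  also have "\<dots> = (x^(2^i))^2 + (y^(2^i))^2" using Suc char2_power2_add by simp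
  also have "\<dots> = x^(2^Suc i) + y^(2^Suc i)" by (simp add: power_mult[symmetric] mult.commute)
  finally show ?case .
qed simp

lemma frobenius_iter_sum: "finite A \<Longrightarrow> (\<Sum>j\<in>A. f j :: 'a)^(2^i) = (\<Sum>j\<in>A. (f j)^(2^i))"
  by (induction A rule: finite_induct) (simp_all add: frobenius_iter_add)

lemma power_card_eq_self: "(x::'a)^(2^r) = x"
proof (cases "x = 0")
  case False
  let ?U = "UNIV - {0::'a}"
  have bij: "bij_betw (\<lambda>y. x*y) ?U ?U"
    using False by (auto simp: bij_betw_def inj_on_def intro!: image_eqI[where x="y / x" for y])
  have "(\<Prod>y\<in>?U. x*y) = (\<Prod>y\<in>?U. y)" using prod.reindex_bij_betw[OF bij, of "\<lambda>y. y"] by simp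
  moreover have "(\<Prod>y\<in>?U. x*y) = x^card ?U * (\<Prod>y\<in>?U. y)" by (simp add: prod.distrib)
  moreover have "(\<Prod>y\<in>?U. y) \<noteq> 0" by simp
  moreover have "card ?U = 2^r - 1" using card_field by (simp add: card_Diff_subset)
  ultimately have "x^(2^r - 1) = 1" by (metis mult_cancel_right2)
  moreover have "(2::nat)^r = Suc (2^r - 1)" by simp
  ultimately show ?thesis by (metis power_Suc mult_1_right)
qed simp

lemma abs_tr_power2: "abs_tr r ((x::'a)^2) = (abs_tr r x)^2"
proof -
  have "(abs_tr r x)^2 = (abs_tr r x)^(2^1)" by simp
  also have "\<dots> = (\<Sum>i<r. (x^(2^i))^(2^1))" unfolding abs_tr_def by (rule frobenius_iter_sum) simp
  also have "\<dots> = (\<Sum>i<r. (x^2)^(2^i))"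
    by (intro sum.cong refl) (simp add: power_mult[symmetric] mult.commute)
  finally show ?thesis by (simp add: abs_tr_def)
qed

text \<open>The trace is fixed by squaring since \<open>x^(2^r) = x\<close>; hence it takes values in the prime field.\<close>

lemma abs_tr_0_or_1: "abs_tr r (x::'a) = 0 \<or> abs_tr r x = 1"
proof -
  obtain r' where r': "r = Suc r'" using r_pos by (cases r) auto
  have "(abs_tr r x)^2 = (\<Sum>i<r. (x^2)^(2^i))" using abs_tr_power2 by (simp add: abs_tr_def)
  also have "\<dots> = (\<Sum>i<r. x^(2^(Suc i)))"
    by (intro sum.cong refl) (simp add: power_mult[symmetric] mult.commute)
  also have "\<dots> = (\<Sum>i<r'. x^(2^(Suc i))) + x"
    unfolding r' sum.lessThan_Suc by (simp only: r'[symmetric] power_card_eq_self)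
  also have "\<dots> = abs_tr r x" unfolding abs_tr_def r' sum.lessThan_Suc_shift by simp
  finally have "abs_tr r x * (abs_tr r x - 1) = 0" by (simp add: algebra_simps power2_eq_square)
  thus ?thesis by auto
qed

lemma abs_tr_add: "abs_tr r ((x::'a) + y) = abs_tr r x + abs_tr r y"
  unfolding abs_tr_def by (simp add: frobenius_iter_add sum.distrib)

lemma add_char_add: "add_char r ((x::'a) + y) = add_char r x * add_char r y"
  using abs_tr_0_or_1[of x] abs_tr_0_or_1[of y] char2_add_self[of 1]
  by (auto simp: add_char_def abs_tr_add)

lemma add_char_power2: "add_char r ((x::'a)^2) = add_char r x"
  unfolding add_char_def abs_tr_power2 by simp

lemma add_char_0 [simp]: "add_char r (0::'a) = 1"
  unfolding add_char_def abs_tr_def by (auto intro!: sum.neutral)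

lemma add_char_uminus: "add_char r (-(x::'a)) = add_char r x"
  by (metis char2_uminus)

lemma add_char_cases: "add_char r (x::'a) = 1 \<or> add_char r x = -1"
  by (simp add: add_char_def)

lemma add_char_sum: "finite U \<Longrightarrow> add_char r (\<Sum>g\<in>U. f g :: 'a) = (\<Prod>g\<in>U. add_char r (f g))"
  by (induction U rule: finite_induct) (simp_all add: add_char_add)

text \<open>The trace is a polynomial of degree \<open>2^(r-1) < q\<close>, so it cannot vanish on the whole field.\<close>

lemma add_char_nontrivial: "\<exists>t::'a. add_char r t = -1"
proof -
  define p :: "'a poly" where "p = (\<Sum>i<r. Polynomial.monom 1 (2^i))"
  have poly_p: "poly p x = abs_tr r x" for x
    by (simp add: p_def abs_tr_def poly_sum poly_monom)
  obtain r' where r': "r = Suc r'" using r_pos by (cases r) auto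
  have "coeff p (2^r') = (\<Sum>i<r. if 2^i = (2::nat)^r' then 1 else 0)"
    by (simp add: p_def coeff_sum coeff_monom)
  also have "\<dots> = (\<Sum>i\<in>{r'}. 1)" using r' by (intro sum.mono_neutral_cong_right) auto
  finally have "p \<noteq> 0" by auto
  have "degree p \<le> 2^r'" unfolding p_def
    by (rule degree_sum_le) (auto simp: degree_monom_eq r')
  hence "card {x. poly p x = 0} \<le> 2^r'" using card_poly_roots_bound[OF \<open>p \<noteq> 0\<close>] by linarith
  also have "\<dots> < CARD('a)" using card_field r' by simp
  finally have "{x. poly p x = 0} \<noteq> UNIV" by auto
  then obtain t where "poly p t \<noteq> 0" by auto
  thus ?thesis using poly_p by (auto simp: add_char_def)
qed

lemma sum_add_char: "(\<Sum>x\<in>UNIV. add_char r (x::'a)) = 0"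
proof -
  obtain t::'a where t: "add_char r t = -1" using add_char_nontrivial by blast
  have bij: "bij_betw (\<lambda>x. x + t) UNIV UNIV"
    by (auto simp: bij_betw_def inj_on_def intro!: image_eqI[where x="y - t" for y])
  have "(\<Sum>x\<in>UNIV. add_char r (x::'a)) = (\<Sum>x\<in>UNIV. add_char r (x + t))"
    using sum.reindex_bij_betw[OF bij, of "add_char r"] by simp
  also have "\<dots> = - (\<Sum>x\<in>UNIV. add_char r (x::'a))" by (simp add: add_char_add t sum_negf)
  finally show ?thesis by simp
qed

lemma sum_add_char_mult: "(\<Sum>a\<in>UNIV. add_char r (a * (y::'a))) = (if y = 0 then int (2^r) else 0)"
proof (cases "y = 0")
  case True then show ?thesis using card_field by simp
next
  case False
  have bij: "bij_betw (\<lambda>x. x * y) UNIV UNIV"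
    using False by (auto simp: bij_betw_def inj_on_def intro!: image_eqI[where x="z / y" for z])
  have "(\<Sum>a\<in>UNIV. add_char r (a * y)) = (\<Sum>x\<in>UNIV. add_char r (x::'a))"
    using sum.reindex_bij_betw[OF bij, of "add_char r"] by simp
  then show ?thesis using False sum_add_char by simp
qed

lemma sum_add_char_mult_nonzero:
  "(\<Sum>a\<in>UNIV-{0}. add_char r (a * (y::'a))) = (if y = 0 then int (2^r) - 1 else -1)"
proof -
  have "(\<Sum>a\<in>UNIV. add_char r (a * y)) = add_char r (0 * y) + (\<Sum>a\<in>UNIV-{0}. add_char r (a * y))"
    by (subst sum.remove[of _ 0]) auto
  thus ?thesis using sum_add_char_mult[of y] by auto
qed

lemma inj_frobenius_iter: "inj (\<lambda>x::'a. x^(2^s))"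
proof (induction s)
  case (Suc s)
  have "inj (\<lambda>x::'a. x^2)"
  proof (rule injI)
    fix x y :: 'a assume "x^2 = y^2"
    hence "(x + y)^2 = 0" using char2_power2_add char2_add_self by simp
    thus "x = y" using char2_uminus by (metis add_eq_0_iff power_eq_0_iff)
  qed
  moreover have "(\<lambda>x::'a. x^(2^Suc s)) = (\<lambda>x. x^2) \<circ> (\<lambda>x. x^(2^s))"
    by (auto simp: power_mult[symmetric] mult.commute)
  ultimately show ?case using Suc by (simp add: inj_compose)
qed simp

lemma bij_betw_frobenius_iter_nonzero: "bij_betw (\<lambda>x::'a. x^(2^s)) (UNIV - {0}) (UNIV - {0})"
proof -
  have "surj (\<lambda>x::'a. x^(2^s))"
    using inj_frobenius_iter[of s] finite_UNIV_inj_surj[of "\<lambda>x::'a. x^(2^s)"] by simp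
  hence "(\<lambda>x::'a. x^(2^s)) ` (UNIV - {0}) = UNIV - {0}"
    using image_set_diff[OF inj_frobenius_iter[of s], of UNIV "{0}"] by (simp add: power_0_left)
  thus ?thesis using inj_frobenius_iter by (auto simp: bij_betw_def intro: inj_on_subset)
qed

lemma add_char_frobenius_iter: "add_char r ((x::'a)^(2^s)) = add_char r x"
proof (induction s)
  case (Suc s)
  have "x^(2^Suc s) = (x^(2^s))^2" by (simp add: power_mult[symmetric] mult.commute)
  thus ?case using Suc add_char_power2 by simp
qed simp

section \<open>Kloosterman sums\<close>

lemma kloosterman_0: "kloosterman r 0 (a::'a) = add_char r a"
  by (simp add: kloosterman_def)

lemma sum_add_char_substitute_inverse:
  assumes "Q \<noteq> (0::'a)"
  shows "(\<Sum>y\<in>UNIV-{0}. add_char r (S + y + d * inverse (Q * y))) =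
    (\<Sum>e\<in>UNIV-{0}. add_char r (d * inverse e) * add_char r (S + e * inverse Q))"
proof -
  have bij: "bij_betw (\<lambda>e. e * inverse Q) (UNIV-{0}) (UNIV-{0})"
    using assms by (auto simp: bij_betw_def inj_on_def field_simps intro!: image_eqI[where x="z * Q" for z])
  have "(\<Sum>y\<in>UNIV-{0}. add_char r (S + y + d * inverse (Q * y))) =
      (\<Sum>e\<in>UNIV-{0}. add_char r (S + e * inverse Q + d * inverse (Q * (e * inverse Q))))"
    using sum.reindex_bij_betw[OF bij, of "\<lambda>y. add_char r (S + y + d * inverse (Q * y))"] by simp
  also have "\<dots> = (\<Sum>e\<in>UNIV-{0}. add_char r (d * inverse e + (S + e * inverse Q)))"
    using assms by (intro sum.cong refl) (simp add: algebra_simps)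
  finally show ?thesis by (simp add: add_char_add)
qed

lemma kloosterman_Suc: "kloosterman r (Suc m) (d::'a) =
   (\<Sum>e\<in>UNIV-{0}. add_char r (d * inverse e) * kloosterman r m e)"
proof -
  let ?F = "UNIV - {0::'a}"
  let ?P = "PiE {..<m} (\<lambda>_. ?F)"
  let ?f = "\<lambda>\<alpha>. add_char r ((\<Sum>i<Suc m. \<alpha> i) + d * inverse (\<Prod>i<Suc m. \<alpha> i))"
  have eq: "PiE {..<Suc m} (\<lambda>_. ?F) = (\<lambda>(y, g). g(m := y)) ` (?F \<times> ?P)"
    unfolding lessThan_Suc by (rule PiE_insert_eq)
  have inj: "inj_on (\<lambda>(y, g). g(m := y)) (?F \<times> ?P)"
    by (rule inj_combinator) simp
  have "kloosterman r (Suc m) d = (\<Sum>(y,g)\<in>?F \<times> ?P. ?f (g(m := y)))"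
    unfolding kloosterman_def eq by (subst sum.reindex[OF inj]) (simp add: case_prod_unfold)
  also have "\<dots> = (\<Sum>g\<in>?P. \<Sum>y\<in>?F. ?f (g(m := y)))"
    by (subst sum.cartesian_product[symmetric]) (rule sum.swap)
  also have "\<dots> = (\<Sum>g\<in>?P. \<Sum>e\<in>?F. add_char r (d * inverse e) *
                     add_char r ((\<Sum>i<m. g i) + e * inverse (\<Prod>i<m. g i)))"
  proof (rule sum.cong[OF refl])
    fix g assume "g \<in> ?P"
    hence Q: "(\<Prod>i<m. g i) \<noteq> 0" by (auto simp: PiE_iff)
    have "(\<Sum>y\<in>?F. ?f (g(m := y))) =
        (\<Sum>y\<in>?F. add_char r ((\<Sum>i<m. g i) + y + d * inverse ((\<Prod>i<m. g i) * y)))"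
      by (intro sum.cong refl) (simp add: sum.lessThan_Suc prod.lessThan_Suc)
    also have "\<dots> = (\<Sum>e\<in>?F. add_char r (d * inverse e) *
                     add_char r ((\<Sum>i<m. g i) + e * inverse (\<Prod>i<m. g i)))"
      by (rule sum_add_char_substitute_inverse[OF Q])
    finally show "(\<Sum>y\<in>?F. ?f (g(m := y))) = \<dots>" .
  qed
  also have "\<dots> = (\<Sum>e\<in>?F. add_char r (d * inverse e) * kloosterman r m e)"
    by (subst sum.swap) (simp add: kloosterman_def sum_distrib_left)
  finally show ?thesis .
qed

lemma kloosterman_frobenius_iter: "kloosterman r m ((a::'a)^(2^s)) = kloosterman r m a"
proof -
  let ?F = "UNIV - {0::'a}"
  let ?P = "PiE {..<m} (\<lambda>_. ?F)"
  let ?k = "\<lambda>a \<alpha>. add_char r ((\<Sum>i<m. \<alpha> i) + a * inverse (\<Prod>i<m. \<alpha> i))"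
  have bij: "bij_betw (\<lambda>\<alpha>. restrict (\<lambda>i. \<alpha> i ^ (2^s)) {..<m}) ?P ?P"
    using bij_betw_PiE_compose[OF bij_betw_frobenius_iter_nonzero[of s]] by (simp add: comp_def)
  have "?k a \<alpha> = ?k (a^(2^s)) (restrict (\<lambda>i. \<alpha> i ^ (2^s)) {..<m})" for \<alpha>
  proof -
    have "((\<Sum>i<m. \<alpha> i) + a * inverse (\<Prod>i<m. \<alpha> i))^(2^s) =
        (\<Sum>i<m. \<alpha> i ^ (2^s)) + a^(2^s) * inverse (\<Prod>i<m. \<alpha> i ^ (2^s))"
      by (simp add: frobenius_iter_add frobenius_iter_sum power_mult_distrib power_inverse prod_power_distrib)
    thus ?thesis using add_char_frobenius_iter[of "(\<Sum>i<m. \<alpha> i) + a * inverse (\<Prod>i<m. \<alpha> i)" s] by simp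
  qed
  hence "kloosterman r m a = (\<Sum>\<alpha>\<in>?P. ?k (a^(2^s)) (restrict (\<lambda>i. \<alpha> i ^ (2^s)) {..<m}))"
    by (simp add: kloosterman_def)
  also have "\<dots> = kloosterman r m (a^(2^s))"
    unfolding kloosterman_def by (rule sum.reindex_bij_betw[OF bij])
  finally show ?thesis ..
qed

lemma sum_kloosterman: "(\<Sum>e\<in>UNIV-{0}. kloosterman r j (e::'a)) = (-1)^(Suc j)"
proof (induction j)
  case 0
  show ?case using sum_add_char_mult_nonzero[of 1] by (simp add: kloosterman_0)
next
  case (Suc j)
  have "(\<Sum>e\<in>UNIV-{0}. kloosterman r (Suc j) (e::'a)) =
        (\<Sum>d\<in>UNIV-{0}. \<Sum>e\<in>UNIV-{0}. add_char r (d * inverse e) * kloosterman r j (e::'a))"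
    by (simp add: kloosterman_Suc)
  also have "\<dots> = (\<Sum>e\<in>UNIV-{0}. (\<Sum>d\<in>UNIV-{0}. add_char r (d * inverse e)) * kloosterman r j (e::'a))"
    by (subst sum.swap) (simp add: sum_distrib_right)
  also have "\<dots> = - (\<Sum>e\<in>UNIV-{0}. kloosterman r j (e::'a))"
    by (simp add: sum_add_char_mult_nonzero sum_negf)
  finally show ?case using Suc by simp
qed

text \<open>Summing \<open>\<lambda>(bc)\<close> against \<open>K_(j+1)(b)\<close> peels off one variable: orthogonality in \<open>b\<close>
  forces \<open>e = c\<^sup>-\<^sup>1\<close> in the recursion of \<open>kloosterman_Suc\<close>.\<close>

lemma sum_add_char_mult_kloosterman_Suc:
  "(\<Sum>b\<in>UNIV-{0}. add_char r (b * c) * kloosterman r (Suc j) (b::'a)) =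
     (if c = 0 then 0 else int (2^r) * kloosterman r j (inverse c)) + (-1)^j"
proof -
  have root: "(c + inverse e = 0) = (e = inverse c \<and> c \<noteq> 0)" if "e \<noteq> 0" for e :: 'a
  proof -
    have "(c + inverse e = 0) = (inverse e = c)" by (metis add_eq_0_iff char2_uminus)
    also have "\<dots> = (e = inverse c \<and> c \<noteq> 0)"
      using that by (metis inverse_inverse_eq inverse_nonzero_iff_nonzero)
    finally show ?thesis .
  qed
  have "(\<Sum>b\<in>UNIV-{0}. add_char r (b * c) * kloosterman r (Suc j) (b::'a)) =
     (\<Sum>b\<in>UNIV-{0}. \<Sum>e\<in>UNIV-{0}. add_char r (b * c) * (add_char r (b * inverse e) * kloosterman r j e))"
    by (simp add: kloosterman_Suc sum_distrib_left)
  also have "\<dots> = (\<Sum>e\<in>UNIV-{0}. \<Sum>b\<in>UNIV-{0}. add_char r (b * (c + inverse e)) * kloosterman r j e)"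
    by (subst sum.swap) (intro sum.cong refl, simp add: distrib_left add_char_add)
  also have "\<dots> = (\<Sum>e\<in>UNIV-{0}. (\<Sum>b\<in>UNIV-{0}. add_char r (b * (c + inverse e))) * kloosterman r j e)"
    by (simp add: sum_distrib_right)
  also have "\<dots> = (\<Sum>e\<in>UNIV-{0}. ((if e = inverse c \<and> c \<noteq> 0 then int (2^r) else 0) - 1) * kloosterman r j e)"
    by (intro sum.cong refl) (simp add: sum_add_char_mult_nonzero root)
  also have "\<dots> = (\<Sum>e\<in>UNIV-{0}. (if e = inverse c \<and> c \<noteq> 0 then int (2^r) * kloosterman r j e else 0))
                 - (\<Sum>e\<in>UNIV-{0}. kloosterman r j (e::'a))"
    by (simp add: left_diff_distrib sum_subtractf if_distrib[of "\<lambda>z. z * kloosterman r j _"] cong: if_cong)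
  also have "(\<Sum>e\<in>UNIV-{0}. (if e = inverse c \<and> c \<noteq> 0 then int (2^r) * kloosterman r j e else 0)) =
      (if c = 0 then 0 else int (2^r) * kloosterman r j (inverse c))"
    by (cases "c = 0") (auto simp: sum.delta')
  finally show ?thesis by (simp add: sum_kloosterman)
qed

section \<open>The character sum over matrices of fixed determinant\<close>

lemma sum_add_char_vec_supported:
  "(\<Sum>v\<in>vec_supported J. add_char r (\<Sum>j\<in>J. v$j * (y j :: 'a))) =
     (if \<forall>j\<in>J. y j = 0 then int (2^r) ^ card J else 0)"
  for J :: "'n::finite set"
proof (cases "\<forall>j\<in>J. y j = 0")
  case True
  hence "(\<Sum>v\<in>vec_supported J. add_char r (\<Sum>j\<in>J. v$j * (y j :: 'a))) =
      int (card (vec_supported J :: ('a^'n) set))" by simp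
  thus ?thesis using True card_vec_supported[where 'a='a and J=J] card_field by simp
next
  case False
  then obtain j0 where j0: "j0 \<in> J" "y j0 \<noteq> 0" by auto
  obtain t :: 'a where t: "add_char r t = -1" using add_char_nontrivial by blast
  define \<delta> where "\<delta> = (t / y j0) *s (axis j0 1 :: 'a^'n)"
  have \<delta>: "\<delta> \<in> vec_supported J" using j0 by (auto simp: vec_supported_def \<delta>_def axis_def)
  have bij: "bij_betw (\<lambda>v. v + \<delta>) (vec_supported J) (vec_supported J)"
    by (rule bij_betwI[where g="\<lambda>v. v - \<delta>"]) (use \<delta> in \<open>auto simp: vec_supported_def\<close>)
  have shift: "(\<Sum>j\<in>J. (v + \<delta>)$j * y j) = (\<Sum>j\<in>J. v$j * y j) + t" for v
  proof -
    have "(\<Sum>j\<in>J. \<delta>$j * y j) = (\<Sum>j\<in>J. if j = j0 then t else 0)"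
      using j0 by (intro sum.cong refl) (auto simp: \<delta>_def axis_def)
    also have "\<dots> = t" using j0 by (simp add: sum.delta')
    finally show ?thesis by (simp add: distrib_right sum.distrib)
  qed
  have "(\<Sum>v\<in>vec_supported J. add_char r (\<Sum>j\<in>J. v$j * y j)) =
      (\<Sum>v\<in>vec_supported J. add_char r (\<Sum>j\<in>J. (v + \<delta>)$j * y j))"
    using sum.reindex_bij_betw[OF bij, of "\<lambda>v. add_char r (\<Sum>j\<in>J. v$j * y j)"] by simp
  also have "\<dots> = (\<Sum>v\<in>vec_supported J. add_char r (\<Sum>j\<in>J. v$j * y j) * add_char r t)"
    by (intro sum.cong refl) (simp only: shift add_char_add)
  also have "\<dots> = - (\<Sum>v\<in>vec_supported J. add_char r (\<Sum>j\<in>J. v$j * y j))"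
    by (simp add: t sum_negf)
  finally show ?thesis using False by simp
qed

text \<open>The determinant of a bordered matrix with zero corner is linear in the new row,
  and it vanishes for every row exactly when the new column is zero.\<close>

lemma sum_add_char_det_border:
  assumes h: "h \<in> ident_outside J" and dh: "det h \<noteq> 0" and k: "k \<notin> J" and a: "a \<noteq> 0"
  shows "(\<Sum>c\<in>vec_supported J. \<Sum>v\<in>vec_supported J.
      add_char r (a * det (border k h 0 v c :: 'a^'n::finite^'n))) = int (2^r) ^ card J"
proof -
  have "(\<Sum>v\<in>vec_supported J. add_char r (a * det (border k h 0 v c :: 'a^'n^'n))) =
      (if c = 0 then int (2^r) ^ card J else 0)" if c: "c \<in> vec_supported J" for c
  proof -
    let ?R = "\<lambda>j. a * det (border k h 0 (axis j 1) c)"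
    have "(\<Sum>v\<in>vec_supported J. add_char r (a * det (border k h 0 v c))) =
        (\<Sum>v\<in>vec_supported J. add_char r (\<Sum>j\<in>J. v$j * ?R j))"
      by (intro sum.cong refl)
        (simp add: det_border_row_linear[OF _ k] sum_distrib_left mult.left_commute)
    also have "\<dots> = (if \<forall>j\<in>J. ?R j = 0 then int (2^r) ^ card J else 0)"
      by (rule sum_add_char_vec_supported)
    also have "(\<forall>j\<in>J. ?R j = 0) = (c = 0)"
      using border_column_eq_0[OF h dh c k] a by (auto simp: det_border_zero_column)
    finally show ?thesis .
  qed
  thus ?thesis by (simp add: sum.delta' vec_supported_def)
qed

lemma sum_border_add_char_nonsingular:
  fixes h :: "'a^'n::finite^'n"
  assumes h: "h \<in> ident_outside J" and k: "k \<notin> J" and dh: "det h \<noteq> 0"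
  shows "(\<Sum>x\<in>UNIV. \<Sum>v\<in>vec_supported J. \<Sum>c\<in>vec_supported J.
      if x * det h + det (border k h 0 v c) = d then add_char r x else 0) =
    int (2^r) ^ card J * add_char r (d * inverse (det h))"
proof -
  let ?D = "det h" and ?R = "\<lambda>v c. det (border k h 0 v c)"
  have "(x * ?D + ?R v c = d) = (x = d * inverse ?D + inverse ?D * ?R v c)" for x v c
  proof -
    have "(x * ?D + ?R v c = d) = (x = (d - ?R v c) / ?D)"
      using dh by (simp add: eq_divide_eq eq_diff_eq)
    also have "(d - ?R v c) / ?D = d * inverse ?D + - (?R v c / ?D)"
      by (simp add: divide_inverse left_diff_distrib)
    also have "\<dots> = d * inverse ?D + inverse ?D * ?R v c"
      by (simp only: char2_uminus) (simp add: divide_inverse mult.commute)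
    finally show ?thesis .
  qed
  hence "(\<Sum>x\<in>UNIV. \<Sum>v\<in>vec_supported J. \<Sum>c\<in>vec_supported J.
      if x * ?D + ?R v c = d then add_char r x else 0) =
    (\<Sum>x\<in>UNIV. \<Sum>v\<in>vec_supported J. \<Sum>c\<in>vec_supported J.
      if x = d * inverse ?D + inverse ?D * ?R v c then add_char r x else 0)"
    by (simp only:)
  also have "\<dots> = (\<Sum>v\<in>vec_supported J. \<Sum>x\<in>UNIV. \<Sum>c\<in>vec_supported J.
      if x = d * inverse ?D + inverse ?D * ?R v c then add_char r x else 0)"
    by (rule sum.swap)
  also have "\<dots> = (\<Sum>v\<in>vec_supported J. \<Sum>c\<in>vec_supported J. \<Sum>x\<in>UNIV.
      if x = d * inverse ?D + inverse ?D * ?R v c then add_char r x else 0)"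
    by (intro sum.cong refl) (rule sum.swap)
  also have "\<dots> = (\<Sum>c\<in>vec_supported J. \<Sum>v\<in>vec_supported J.
      add_char r (d * inverse ?D) * add_char r (inverse ?D * ?R v c))"
    by (subst sum.swap) (simp only: sum.delta add_char_add finite UNIV_I if_True)
  also have "\<dots> = add_char r (d * inverse ?D) * int (2^r) ^ card J"
    using sum_add_char_det_border[OF h dh k, of "inverse ?D"] dh
    by (simp add: sum_distrib_left[symmetric])
  finally show ?thesis by simp
qed

lemma sum_border_add_char:
  fixes h :: "'a^'n::finite^'n"
  assumes h: "h \<in> ident_outside J" and k: "k \<notin> J"
  shows "(\<Sum>x\<in>UNIV. \<Sum>v\<in>vec_supported J. \<Sum>c\<in>vec_supported J.
      if x * det h + det (border k h 0 v c) = d then add_char r x else 0) =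
    (if det h = 0 then 0 else int (2^r) ^ card J * add_char r (d * inverse (det h)))"
  (is "?G = _")
proof (cases "det h = 0")
  case True
  have vanish: "(\<Sum>x::'a\<in>UNIV. if P then add_char r x else 0) = 0" for P
    by (cases P) (simp_all add: sum_add_char)
  have "?G = (\<Sum>x::'a\<in>UNIV. \<Sum>v\<in>vec_supported J. \<Sum>c\<in>vec_supported J.
      if det (border k h 0 v c) = d then add_char r x else 0)"
    using True by simp
  also have "\<dots> = (\<Sum>v\<in>vec_supported J. \<Sum>x::'a\<in>UNIV. \<Sum>c\<in>vec_supported J.
      if det (border k h 0 v c) = d then add_char r x else 0)"
    by (rule sum.swap)
  also have "\<dots> = (\<Sum>v\<in>vec_supported J. \<Sum>c\<in>vec_supported J. \<Sum>x::'a\<in>UNIV.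
      if det (border k h 0 v c) = d then add_char r x else 0)"
    by (intro sum.cong refl) (rule sum.swap)
  also have "\<dots> = 0" by (simp only: vanish sum.neutral_const)
  finally have "?G = 0" .
  thus ?thesis using True by simp
qed (simp add: sum_border_add_char_nonsingular[OF h k])

definition char_det_sum :: "'n::finite set \<Rightarrow> 'a \<Rightarrow> int" where
  "char_det_sum I d =
    (\<Sum>A\<in>(ident_outside I :: ('a^'n^'n) set). if det A = d then add_char r (partial_trace I A) else 0)"

lemma char_det_sum_insert:
  fixes k :: "'n::finite"
  assumes k: "k \<notin> J"
  shows "char_det_sum (insert k J) d =
    int (2^r) ^ card J * (\<Sum>e\<in>UNIV-{0}. add_char r (d * inverse e) * char_det_sum J e)"
proof -
  have "char_det_sum (insert k J) d = (\<Sum>h\<in>ident_outside J. add_char r (partial_trace J h) *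
      (\<Sum>x\<in>UNIV. \<Sum>v\<in>vec_supported J. \<Sum>c\<in>vec_supported J.
         if x * det h + det (border k h 0 v c) = d then add_char r x else 0))"
    unfolding char_det_sum_def sum_ident_outside_insert[OF k] sum_distrib_left
  proof (intro sum.cong refl)
    fix h :: "'a^'n^'n" and x :: 'a and v c :: "'a^'n"
    assume "h \<in> ident_outside J" and "c \<in> vec_supported J"
    then show "(if det (border k h x v c) = d then add_char r (partial_trace (insert k J) (border k h x v c)) else 0) =
          add_char r (partial_trace J h) * (if x * det h + det (border k h 0 v c) = d then add_char r x else 0)"
      using det_border_split[of k h x v c] det_border_1[of h J c k] partial_trace_border[OF k, of h x v c] k
      by (simp add: add_char_add)
  qed
  also have "\<dots> = (\<Sum>h\<in>ident_outside J. if det h = 0 then 0 else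
      int (2^r) ^ card J * (add_char r (d * inverse (det h)) * add_char r (partial_trace J h)))"
    by (intro sum.cong refl) (simp add: sum_border_add_char[OF _ k])
  also have "\<dots> = int (2^r) ^ card J * (\<Sum>h\<in>ident_outside J. \<Sum>e\<in>UNIV-{0}.
      if det h = e then add_char r (d * inverse e) * add_char r (partial_trace J h) else 0)"
    by (subst sum_distrib_left) (intro sum.cong refl, simp add: sum.delta')
  also have "\<dots> = int (2^r) ^ card J * (\<Sum>e\<in>UNIV-{0}. \<Sum>h\<in>ident_outside J.
      if det h = e then add_char r (d * inverse e) * add_char r (partial_trace J h) else 0)"
    by (subst sum.swap) (rule refl)
  also have "\<dots> = int (2^r) ^ card J * (\<Sum>e\<in>UNIV-{0}. add_char r (d * inverse e) * char_det_sum J e)"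
    unfolding char_det_sum_def sum_distrib_left by (intro arg_cong[where f="(*) _"] sum.cong refl) simp
  finally show ?thesis .
qed

lemma char_det_sum_empty: "char_det_sum ({}::'n::finite set) e = (if e = 1 then 1 else 0)"
  by (simp add: char_det_sum_def ident_outside_empty partial_trace_def add_char_0)

lemma char_det_sum_eq_kloosterman:
  fixes I :: "'n::finite set"
  assumes "I \<noteq> {}"
  shows "char_det_sum I d = int (2^r) ^ (card I choose 2) * kloosterman r (card I - 1) d"
  using finite[of I] assms
proof (induction I arbitrary: d rule: finite_ne_induct)
  case (singleton k)
  have "char_det_sum {k} d = (\<Sum>e\<in>UNIV-{0}. if e = 1 then add_char r (d * inverse e) else 0)"
    using char_det_sum_insert[of k "{}" d] by (simp add: char_det_sum_empty if_distrib cong: if_cong)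
  also have "\<dots> = add_char r d" by (simp add: sum.delta)
  finally show ?case by (simp add: kloosterman_0 binomial_eq_0)
next
  case (insert k J)
  obtain m where m: "card J = Suc m" using insert by (cases "card J") auto
  have "card (insert k J) choose 2 = card J + (card J choose 2)"
    using insert m by (simp add: numeral_2_eq_2)
  hence "char_det_sum (insert k J) d = int (2^r) ^ (card (insert k J) choose 2) *
      (\<Sum>e\<in>UNIV-{0}. add_char r (d * inverse e) * kloosterman r m e)"
    using char_det_sum_insert[of k J d] insert.hyps insert.IH
    by (simp add: m power_add sum_distrib_left mult_ac)
  thus ?case using insert m by (simp add: kloosterman_Suc)
qed

lemma sum_det_eq_add_char_trace: "(\<Sum>A\<in>(UNIV::('a^'n::finite^'n) set). if det A = d then add_char r (trace A) else 0) =
     int (2^r) ^ (CARD('n) choose 2) * kloosterman r (CARD('n) - 1) d"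
proof -
  have eq: "\<And>A::'a^'n^'n. partial_trace UNIV A = trace A" by (simp add: partial_trace_def trace_def)
  have "char_det_sum (UNIV::'n set) d = int (2^r) ^ (CARD('n) choose 2) * kloosterman r (CARD('n) - 1) d"
    by (rule char_det_sum_eq_kloosterman) simp
  thus ?thesis unfolding char_det_sum_def ident_outside_UNIV eq .
qed

section \<open>Character sums over the special linear group\<close>

text \<open>Scaling by \<open>a\<close> maps \<open>SL\<close> onto the matrices of determinant \<open>a^n\<close>.\<close>

lemma sum_SL_add_char_trace:
  assumes a: "(a::'a) \<noteq> 0"
  shows "(\<Sum>g\<in>(SL :: ('a^'n::finite^'n) set). add_char r (a * trace g)) =
     int (2^r) ^ (CARD('n) choose 2) * kloosterman r (CARD('n) - 1) (a ^ CARD('n))"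
proof -
  have bij: "bij_betw (scale_mat a) (SL :: ('a^'n^'n) set) {A. det A = a ^ CARD('n)}"
  proof (rule bij_betwI[where g="scale_mat (inverse a)"])
    show "scale_mat a \<in> (SL :: ('a^'n^'n) set) \<rightarrow> {A. det A = a ^ CARD('n)}"
      by (auto simp: SL_def det_scale_mat)
    show "scale_mat (inverse a) \<in> {A. det A = a ^ CARD('n)} \<rightarrow> (SL :: ('a^'n^'n) set)"
      using a by (auto simp: SL_def det_scale_mat power_inverse)
    show "scale_mat (inverse a) (scale_mat a g) = g" for g :: "'a^'n^'n"
      using a by (rule scale_mat_inverse)
    show "scale_mat a (scale_mat (inverse a) g) = g" for g :: "'a^'n^'n"
      using scale_mat_inverse[of "inverse a" g] a by simp
  qed
  have "(\<Sum>g\<in>(SL :: ('a^'n^'n) set). add_char r (a * trace g)) =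
      (\<Sum>A\<in>{A. det A = a ^ CARD('n)}. add_char r (trace (A :: 'a^'n^'n)))"
    unfolding trace_scale_mat[symmetric] by (rule sum.reindex_bij_betw[OF bij])
  also have "\<dots> = (\<Sum>A\<in>UNIV. if det A = a ^ CARD('n) then add_char r (trace (A :: 'a^'n^'n)) else 0)"
    by (simp add: sum.If_cases Collect_conv_if)
  finally show ?thesis by (simp only: sum_det_eq_add_char_trace)
qed

definition char_minus_set :: "'a \<Rightarrow> ('a^'n::finite^'n) set" where
  "char_minus_set a = {g \<in> SL. add_char r (a * trace g) = -1}"

lemma char_minus_set_0: "char_minus_set 0 = {}"
  by (simp add: char_minus_set_def)

lemma card_char_minus_set:
  "int (2 * card (char_minus_set a :: ('a^'n::finite^'n) set)) =
     int (card (SL :: ('a^'n^'n) set)) - (\<Sum>g\<in>(SL :: ('a^'n^'n) set). add_char r (a * trace g))"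
proof -
  let ?S = "SL :: ('a^'n^'n) set"
  have "(\<Sum>g\<in>?S. add_char r (a * trace g)) = (\<Sum>g\<in>?S. 1 - 2 * (if g \<in> char_minus_set a then 1 else 0))"
    using add_char_cases by (intro sum.cong refl) (force simp: char_minus_set_def)
  also have "\<dots> = int (card ?S) - 2 * (\<Sum>g\<in>?S. if g \<in> char_minus_set a then 1 else 0)"
    by (simp add: sum_subtractf sum_distrib_left)
  also have "(\<Sum>g\<in>?S. if g \<in> char_minus_set a then 1 else (0::int)) = int (card (char_minus_set a :: ('a^'n^'n) set))"
  proof -
    have "{g \<in> ?S. g \<in> char_minus_set a} = char_minus_set a" by (auto simp: char_minus_set_def)
    thus ?thesis using sum.inter_filter[of ?S "\<lambda>_. 1::int" "\<lambda>g. g \<in> char_minus_set a"] by simp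
  qed
  finally show ?thesis by simp
qed

text \<open>Inclusion--exclusion in product form: \<open>1 - \<lambda>(a tr g)\<close> is 2 on \<open>char_minus_set a\<close> and 0 elsewhere.\<close>

lemma prod_one_minus_add_char:
  assumes "finite T"
  shows "(\<Prod>g\<in>T. 1 - add_char r (a * trace g)) =
     (\<Sum>U\<in>Pow T. (-1) ^ card U * add_char r (a * (\<Sum>g\<in>U. trace (g :: 'a^'n::finite^'n))))"
proof -
  have "(\<Prod>g\<in>T. 1 - add_char r (a * trace g)) =
      (\<Sum>U\<in>Pow T. (\<Prod>g\<in>U. - add_char r (a * trace g)) * (\<Prod>g\<in>T-U. 1))"
    using prod_add[OF assms, of "\<lambda>g. - add_char r (a * trace g)" "\<lambda>_. 1"] by simp
  also have "\<dots> = (\<Sum>U\<in>Pow T. (-1) ^ card U * add_char r (a * (\<Sum>g\<in>U. trace g)))"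
  proof (intro sum.cong refl)
    fix U assume "U \<in> Pow T"
    hence "finite U" using assms finite_subset by auto
    thus "(\<Prod>g\<in>U. - add_char r (a * trace g)) * (\<Prod>g\<in>T-U. 1) =
        (-1) ^ card U * add_char r (a * (\<Sum>g\<in>U. trace g))"
      by (simp add: prod_uminus add_char_sum sum_distrib_left)
  qed
  finally show ?thesis .
qed

lemma prod_one_minus_add_char_SL:
  assumes "T \<subseteq> (SL :: ('a^'n::finite^'n) set)"
  shows "(\<Prod>g\<in>T. 1 - add_char r (a * trace g)) = (if T \<subseteq> char_minus_set a then 2 ^ card T else 0)"
proof (cases "T \<subseteq> char_minus_set a")
  case True
  hence "(\<Prod>g\<in>T. 1 - add_char r (a * trace g)) = (\<Prod>g\<in>T. 2)"
    by (intro prod.cong refl) (auto simp: char_minus_set_def)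
  thus ?thesis using True by simp
next
  case False
  then obtain g where "g \<in> T" "g \<notin> char_minus_set a" by auto
  moreover from this have "add_char r (a * trace g) = 1"
    using assms add_char_cases[of "a * trace g"] by (auto simp: char_minus_set_def)
  ultimately show ?thesis using False by (auto intro: prod_zero)
qed

lemma card_char_minus_set_choose:
  "int (2^t) * int (card (char_minus_set a :: ('a^'n::finite^'n) set) choose t) =
    (\<Sum>T\<in>{T. T \<subseteq> (SL :: ('a^'n^'n) set) \<and> card T = t}. \<Prod>g\<in>T. 1 - add_char r (a * trace g))"
proof -
  let ?X = "{T. T \<subseteq> (SL :: ('a^'n^'n) set) \<and> card T = t}"
  let ?W = "char_minus_set a :: ('a^'n^'n) set"
  have "(\<Sum>T\<in>?X. \<Prod>g\<in>T. 1 - add_char r (a * trace g)) = (\<Sum>T\<in>?X. if T \<subseteq> ?W then 2 ^ t else 0)"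
    by (intro sum.cong refl) (auto simp: prod_one_minus_add_char_SL)
  also have "\<dots> = (\<Sum>T\<in>{T \<in> ?X. T \<subseteq> ?W}. 2 ^ t)" by (rule sum.inter_filter[symmetric]) simp
  also have "{T \<in> ?X. T \<subseteq> ?W} = {T. T \<subseteq> ?W \<and> card T = t}" by (auto simp: char_minus_set_def)
  finally show ?thesis by (simp add: n_subsets)
qed

lemma sum_card_char_minus_set_choose:
  "(\<Sum>a\<in>UNIV. int (2^t) * int (card (char_minus_set a :: ('a^'n::finite^'n) set) choose t)) =
    int (2^r) * signed_zero_trace_count (SL :: ('a^'n^'n) set) t"
proof -
  let ?X = "{T. T \<subseteq> (SL :: ('a^'n^'n) set) \<and> card T = t}"
  have "(\<Sum>a\<in>UNIV. int (2^t) * int (card (char_minus_set a :: ('a^'n^'n) set) choose t)) =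
    (\<Sum>a\<in>UNIV. \<Sum>T\<in>?X. \<Sum>U\<in>Pow T. (-1) ^ card U * add_char r (a * (\<Sum>g\<in>U. trace g)))"
    by (simp only: card_char_minus_set_choose prod_one_minus_add_char[OF finite])
  also have "\<dots> = (\<Sum>T\<in>?X. \<Sum>U\<in>Pow T. (-1) ^ card U * (\<Sum>a\<in>UNIV. add_char r (a * (\<Sum>g\<in>U. trace g))))"
    by (subst sum.swap) (simp add: sum.swap[of _ UNIV] sum_distrib_left)
  also have "\<dots> = (\<Sum>T\<in>?X. \<Sum>U\<in>Pow T. int (2^r) * (if (\<Sum>g\<in>U. trace g) = 0 then (-1) ^ card U else 0))"
    by (intro sum.cong refl) (simp add: sum_add_char_mult)
  also have "\<dots> = int (2^r) * signed_zero_trace_count (SL :: ('a^'n^'n) set) t"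
    by (simp add: signed_zero_trace_count_def sum_distrib_left)
  finally show ?thesis .
qed

lemma card_fibre_add_char:
  assumes "finite X"
  shows "int (card {x\<in>X. f x = \<beta>}) * int (2^r) =
    int (card X) + (\<Sum>a\<in>UNIV-{0}. add_char r (a * \<beta>) * (\<Sum>x\<in>X. add_char r (a * f x :: 'a)))"
proof -
  have "int (card {x\<in>X. f x = \<beta>}) * int (2^r) = (\<Sum>x\<in>X. if f x - \<beta> = 0 then int (2^r) else 0)"
    using assms by (simp add: sum.If_cases Int_def conj_commute)
  also have "\<dots> = (\<Sum>a\<in>UNIV. \<Sum>x\<in>X. add_char r (a * (f x - \<beta>)))"
    by (subst sum.swap) (simp add: sum_add_char_mult)
  also have "\<dots> = int (card X) + (\<Sum>a\<in>UNIV-{0}. \<Sum>x\<in>X. add_char r (a * (f x - \<beta>)))"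
    by (subst sum.remove[of UNIV 0]) auto
  also have "(\<Sum>a\<in>UNIV-{0}. \<Sum>x\<in>X. add_char r (a * (f x - \<beta>))) =
      (\<Sum>a\<in>UNIV-{0}. add_char r (a * \<beta>) * (\<Sum>x\<in>X. add_char r (a * f x)))"
  proof -
    have "add_char r (a * (f x - \<beta>)) = add_char r (a * \<beta>) * add_char r (a * f x)" for a x
    proof -
      have "add_char r (a * (f x - \<beta>)) = add_char r (a * f x + - (a * \<beta>))"
        by (simp add: algebra_simps)
      also have "\<dots> = add_char r (a * f x) * add_char r (a * \<beta>)"
        by (simp only: add_char_add add_char_uminus)
      finally show ?thesis by (simp only: mult.commute)
    qed
    thus ?thesis by (simp add: sum_distrib_left)
  qed
  finally show ?thesis .
qed

text \<open>Writing \<open>w^h\<close> through Stirling numbers as a sum of \<open>t! (w choose t)\<close> and counting the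
  \<open>t\<close>-subsets of \<open>char_minus_set a\<close> by \<open>card_char_minus_set_choose\<close> expresses the moments
  of \<open>2 |char_minus_set a|\<close> through the numbers of zero-trace subsets of \<open>SL\<close>.\<close>

lemma sum_power_card_char_minus_set:
  fixes N :: nat
  defines "N \<equiv> card (SL :: ('a^'n::finite^'n) set)"
  shows "(\<Sum>a\<in>UNIV. int (2 * card (char_minus_set a :: ('a^'n^'n) set)) ^ h) =
    int (2^r) * (\<Sum>i=0..min N h. (-1)^i * int (card (zero_trace_subsets i :: ('a^'n^'n) set set)) *
      (\<Sum>t=i..h. int (fact t) * int (Stirling h t) * 2 ^ (h - t) *
         (if t \<le> N then int ((N - i) choose (N - t)) else 0)))"
proof -
  let ?w = "\<lambda>a::'a. card (char_minus_set a :: ('a^'n^'n) set)"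
  define F where "F = (\<lambda>t. int (fact t) * int (Stirling h t) * 2 ^ (h - t))"
  define G where "G = (\<lambda>i. (-1::int)^i * int (card (zero_trace_subsets i :: ('a^'n^'n) set set)))"
  have "int (2 * ?w a) ^ h = (\<Sum>t\<le>h. F t * (int (2^t) * int (?w a choose t)))" for a
  proof -
    have "int (2 * ?w a) ^ h = 2^h * int (\<Sum>t\<le>h. Stirling h t * (fact t * (?w a choose t)))"
      by (simp only: power_eq_sum_Stirling_fact_choose[symmetric] of_nat_mult of_nat_power power_mult_distrib)
        simp
    also have "\<dots> = (\<Sum>t\<le>h. 2^h * (int (Stirling h t) * (int (fact t) * int (?w a choose t))))"
      by (simp add: sum_distrib_left)
    also have "\<dots> = (\<Sum>t\<le>h. F t * (int (2^t) * int (?w a choose t)))"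
    proof (intro sum.cong refl)
      fix t assume "t \<in> {..h}"
      hence "(2::int)^h = 2^(h-t) * 2^t" by (simp add: power_add[symmetric])
      thus "2^h * (int (Stirling h t) * (int (fact t) * int (?w a choose t))) = F t * (int (2^t) * int (?w a choose t))"
        by (simp add: F_def mult_ac)
    qed
    finally show ?thesis .
  qed
  hence "(\<Sum>a\<in>UNIV. int (2 * ?w a) ^ h) = (\<Sum>a\<in>UNIV. \<Sum>t\<le>h. F t * (int (2^t) * int (?w a choose t)))"
    by (simp only:)
  also have "\<dots> = (\<Sum>t\<le>h. F t * (\<Sum>a\<in>UNIV. int (2^t) * int (?w a choose t)))"
    by (subst sum.swap) (simp only: sum_distrib_left)
  also have "\<dots> = int (2^r) * (\<Sum>t\<le>h. F t * (\<Sum>i\<in>{0..N}. G i *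
      (if i \<le> t then int ((N - i) choose (t - i)) else 0)))"
    unfolding sum_card_char_minus_set_choose signed_zero_trace_count_SL G_def N_def
    by (simp only: sum_distrib_left mult.left_commute)
  also have "\<dots> = int (2^r) * (\<Sum>i=0..min N h. G i * (\<Sum>t=i..h. F t *
      (if t \<le> N then int ((N - i) choose (N - t)) else 0)))"
    by (simp only: sum_choose_exchange)
  finally show ?thesis by (simp add: F_def G_def)
qed

section \<open>Moments of Kloosterman sums and the trace distribution\<close>

context
  fixes s :: nat
  assumes card_index: "CARD('n::finite) = 2^s" and s_pos: "s > 0"
begin

lemma card_index_ge_2: "CARD('n) \<ge> 2"
  using card_index s_pos power_increasing[of 1 s "2::nat"] by simp

text \<open>As \<open>n\<close> is a power of 2, \<open>a \<mapsto> a^n\<close> permutes \<open>F\<^sub>q\<^sup>*\<close> and commutes with \<open>\<lambda>\<close> and the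
  Kloosterman sums; moreover \<open>n - 2\<close> is even.\<close>

lemma sum_add_char_mult_kloosterman_power:
  "(\<Sum>a\<in>UNIV-{0}. add_char r (a * \<beta>) * kloosterman r (CARD('n) - 1) (a ^ CARD('n))) =
     int (2^r) * theta r (CARD('n)) \<beta> + 1"
  for \<beta> :: 'a
proof -
  let ?n = "CARD('n)"
  let ?K = "kloosterman r (?n - 1)"
  have "(\<Sum>a\<in>UNIV-{0}. add_char r (a * \<beta>) * ?K (a ^ ?n)) =
      (\<Sum>a\<in>UNIV-{0}. add_char r (a^(2^s) * \<beta>^(2^s)) * ?K (a ^ (2^s)))"
    by (intro sum.cong refl)
      (simp add: card_index power_mult_distrib[symmetric] add_char_frobenius_iter)
  also have "\<dots> = (\<Sum>b\<in>UNIV-{0}. add_char r (b * \<beta>^(2^s)) * ?K b)"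
    using sum.reindex_bij_betw[OF bij_betw_frobenius_iter_nonzero[of s],
        of "\<lambda>b. add_char r (b * \<beta>^(2^s)) * ?K b"] by simp
  also have "\<dots> = (if \<beta> = 0 then 0 else int (2^r) * kloosterman r (?n - 2) (inverse (\<beta>^(2^s)))) + (-1)^(?n - 2)"
  proof -
    have "?n - 1 = Suc (?n - 2)" using card_index_ge_2 by simp
    thus ?thesis using sum_add_char_mult_kloosterman_Suc[of "\<beta>^(2^s)" "?n - 2"] by simp
  qed
  also have "kloosterman r (?n - 2) (inverse (\<beta>^(2^s))) = kloosterman r (?n - 2) (inverse \<beta>)"
    by (simp only: power_inverse[symmetric] kloosterman_frobenius_iter)
  also have "(-1::int)^(?n - 2) = 1" using card_index s_pos card_index_ge_2 by simp
  finally show ?thesis by (simp add: theta_def)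
qed

lemma card_SL_trace_eq_mult:
  "int (card {g \<in> (SL :: ('a^'n^'n) set). trace g = \<beta>}) * int (2^r) =
     int (card (SL :: ('a^'n^'n) set)) +
     int (2^r) ^ (CARD('n) choose 2) * (int (2^r) * theta r (CARD('n)) \<beta> + 1)"
proof -
  have "(\<Sum>a\<in>UNIV-{0}. add_char r (a * \<beta>) * (\<Sum>g\<in>(SL :: ('a^'n^'n) set). add_char r (a * trace g))) =
      int (2^r) ^ (CARD('n) choose 2) *
      (\<Sum>a\<in>UNIV-{0}. add_char r (a * \<beta>) * kloosterman r (CARD('n) - 1) (a ^ CARD('n)))"
    by (simp add: sum_SL_add_char_trace sum_distrib_left mult_ac)
  thus ?thesis
    using card_fibre_add_char[of "SL :: ('a^'n^'n) set" trace \<beta>] sum_add_char_mult_kloosterman_power[of \<beta>]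
    by simp
qed

text \<open>The other evaluation of the moment: \<open>2 |char_minus_set a| = N - q^(n choose 2) K(a^n)\<close>.\<close>

lemma sum_power_card_char_minus_set_MK:
  assumes "h > 0"
  defines "N \<equiv> card (SL :: ('a^'n^'n) set)"
  shows "(\<Sum>a\<in>UNIV. int (2 * card (char_minus_set a :: ('a^'n^'n) set)) ^ h) =
    (\<Sum>i\<le>h. int (h choose i) * (-1)^i * int (2^r) ^ ((CARD('n) choose 2) * i) * int N ^ (h - i) *
       MK r TYPE('a) (CARD('n) - 1) i)"
proof -
  let ?Q = "int (2^r) ^ (CARD('n) choose 2)"
  let ?K = "kloosterman r (CARD('n) - 1) :: 'a \<Rightarrow> int"
  have twice_card: "int (2 * card (char_minus_set a :: ('a^'n^'n) set)) = int N - ?Q * ?K (a ^ CARD('n))"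
    if "a \<noteq> 0" for a
    using card_char_minus_set[of a, where 'n='n] sum_SL_add_char_trace[OF that, where 'n='n] by (simp add: N_def)
  have "(\<Sum>a\<in>UNIV. int (2 * card (char_minus_set a :: ('a^'n^'n) set)) ^ h) =
      int (2 * card (char_minus_set 0 :: ('a^'n^'n) set)) ^ h +
      (\<Sum>a\<in>UNIV-{0}. int (2 * card (char_minus_set a :: ('a^'n^'n) set)) ^ h)"
    by (rule sum.remove) simp_all
  also have "\<dots> = (\<Sum>a\<in>UNIV-{0}. (int N - ?Q * ?K (a ^ CARD('n))) ^ h)"
    using assms(1) by (simp add: char_minus_set_0 twice_card del: of_nat_mult power_mult_distrib)
  also have "\<dots> = (\<Sum>b\<in>UNIV-{0}. (int N - ?Q * ?K b) ^ h)"
    using sum.reindex_bij_betw[OF bij_betw_frobenius_iter_nonzero[of s], of "\<lambda>b. (int N - ?Q * ?K b) ^ h"]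
    by (simp add: card_index)
  also have "\<dots> = (\<Sum>b\<in>UNIV-{0}. \<Sum>i\<le>h. int (h choose i) * (-1)^i * ?Q ^ i * int N ^ (h - i) * ?K b ^ i)"
    by (simp add: binomial_diff_power power_mult_distrib mult_ac)
  also have "\<dots> = (\<Sum>i\<le>h. int (h choose i) * (-1)^i * ?Q ^ i * int N ^ (h - i) * MK r TYPE('a) (CARD('n) - 1) i)"
    by (subst sum.swap) (simp add: MK_def sum_distrib_left)
  finally show ?thesis by (simp add: power_mult)
qed

lemma card_SL_trace_eq:
  "int (card {g \<in> (SL :: ('a^'n^'n) set). trace g = \<beta>}) = int CARD('a) ^ ((CARD('n) choose 2) - 1) *
     ((\<Prod>j=2..CARD('n). int CARD('a) ^ j - 1) + 1 + int CARD('a) * theta r (CARD('n)) \<beta>)"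
proof -
  let ?q = "int CARD('a)" and ?C = "CARD('n) choose 2"
  have "?C = Suc (?C - 1)" using card_index_ge_2 by (simp add: Suc_le_eq)
  hence q_pow: "?q ^ ?C = ?q ^ (?C - 1) * ?q" by (metis power_Suc2)
  have "int (card (SL :: ('a^'n^'n) set)) = ?q ^ ?C * (\<Prod>j=2..CARD('n). ?q ^ j - 1)"
    by (simp add: card_SL of_nat_prod of_nat_diff)
  hence "int (card {g \<in> (SL :: ('a^'n^'n) set). trace g = \<beta>}) * ?q =
      ?q ^ (?C - 1) * ((\<Prod>j=2..CARD('n). ?q ^ j - 1) + 1 + ?q * theta r (CARD('n)) \<beta>) * ?q"
    using card_SL_trace_eq_mult[of \<beta>] by (simp add: card_field[symmetric] q_pow algebra_simps)
  thus ?thesis by simp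
qed

text \<open>Both evaluations of \<open>\<Sum>\<^sub>a (2 |char_minus_set a|)^h\<close> agree; solving for the top term gives
  the recursion.\<close>

lemma MK_moment_recursion:
  assumes "h > 0"
  defines "q \<equiv> CARD('a)" and "C \<equiv> CARD('n) choose 2" and "N \<equiv> card (SL :: ('a^'n^'n) set)"
  shows "int q ^ (C * h) * MK r TYPE('a) (CARD('n) - 1) h =
    (\<Sum>i=0..h-1. (-1) ^ (h + i + 1) * int (h choose i) * int N ^ (h - i)
                   * int q ^ (C * i) * MK r TYPE('a) (CARD('n) - 1) i)
    + int q * (\<Sum>i=0..min N h. (-1) ^ (h + i) * int (weight_dist TYPE('a^'n^'n) i) *
        (\<Sum>t=i..h. int (fact t) * int (Stirling h t) * 2 ^ (h - t)
            * (if t \<le> N then int ((N - i) choose (N - t)) else 0)))"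
proof -
  define X where "X i = int (h choose i) * int q ^ (C * i) * int N ^ (h - i) * MK r TYPE('a) (CARD('n) - 1) i" for i
  define R where "R = (\<Sum>i=0..min N h. (-1)^i * int (weight_dist TYPE('a^'n^'n) i) *
    (\<Sum>t=i..h. int (fact t) * int (Stirling h t) * 2 ^ (h - t) *
       (if t \<le> N then int ((N - i) choose (N - t)) else 0)))"
  have "(\<Sum>i\<le>h. (-1)^i * X i) = (\<Sum>a\<in>UNIV. int (2 * card (char_minus_set a :: ('a^'n^'n) set)) ^ h)"
    unfolding sum_power_card_char_minus_set_MK[OF assms(1)] X_def q_def C_def N_def card_field
    by (simp add: mult_ac)
  also have "\<dots> = int q * R"
    unfolding R_def q_def N_def card_field weight_dist_eq_card_zero_trace_subsets
    by (rule sum_power_card_char_minus_set)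
  finally have "(\<Sum>i\<le>h. (-1)^i * X i) = int q * R" .
  hence "X h = (\<Sum>i=0..h-1. (-1)^(h+i+1) * X i) + (-1)^h * (int q * R)"
    by (rule alternating_sum_solve_last[OF assms(1)])
  thus ?thesis
    by (simp add: X_def R_def sum_distrib_left power_add mult_ac)
qed

end

end
theorem theorem1:
  fixes r s :: nat
  assumes "r > 0" and "s > 0"
    and "CARD('a::{field,finite}) = 2 ^ r"
    and "CARD('n::finite) = 2 ^ s"
  defines "q \<equiv> CARD('a)"
    and "n \<equiv> CARD('n)"
  defines "N \<equiv> q ^ (n choose 2) * (\<Prod>j=2..n. q ^ j - 1)"
  defines "C \<equiv> weight_dist TYPE('a^'n^'n)"
  defines "nb \<equiv> (\<lambda>\<beta>::'a. card {g \<in> (SL :: ('a^'n^'n) set). trace g = \<beta>})"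
  shows "card (SL :: ('a^'n^'n) set) = N
    \<and> (\<forall>h::nat. h > 0 \<longrightarrow>
         int q ^ ((n choose 2) * h) * MK r TYPE('a) (n - 1) h =
           (\<Sum>i=0..h-1. (-1) ^ (h + i + 1) * int (h choose i) * int N ^ (h - i)
                          * int q ^ ((n choose 2) * i) * MK r TYPE('a) (n - 1) i)
         + int q * (\<Sum>i=0..min N h. (-1) ^ (h + i) * int (C i) *
              (\<Sum>t=i..h. int (fact t) * int (Stirling h t) * 2 ^ (h - t)
                  * (if t \<le> N then int ((N - i) choose (N - t)) else 0))))
    \<and> (\<forall>i\<le>N. C i = (\<Sum>\<nu>\<in>{\<nu>::'a \<Rightarrow> nat. (\<Sum>\<beta>\<in>UNIV. \<nu> \<beta>) = i
                                  \<and> (\<Sum>\<beta>\<in>UNIV. of_nat (\<nu> \<beta>) * \<beta>) = 0}.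
                      \<Prod>\<beta>\<in>UNIV. nb \<beta> choose \<nu> \<beta>))
    \<and> (\<forall>\<beta>::'a. int (nb \<beta>) = int q ^ ((n choose 2) - 1) *
           ((\<Prod>j=2..n. int q ^ j - 1) + 1 + int q * theta r n \<beta>))"
proof -
  have card_SL_N: "card (SL :: ('a^'n^'n) set) = N"
    unfolding N_def q_def n_def by (rule card_SL)
  have moments: "int q ^ ((n choose 2) * h) * MK r TYPE('a) (n - 1) h =
           (\<Sum>i=0..h-1. (-1) ^ (h + i + 1) * int (h choose i) * int N ^ (h - i)
                          * int q ^ ((n choose 2) * i) * MK r TYPE('a) (n - 1) i)
         + int q * (\<Sum>i=0..min N h. (-1) ^ (h + i) * int (C i) *
              (\<Sum>t=i..h. int (fact t) * int (Stirling h t) * 2 ^ (h - t)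
                  * (if t \<le> N then int ((N - i) choose (N - t)) else 0)))" if "h > 0" for h
    using MK_moment_recursion[OF assms(3,1,4,2) that] unfolding q_def n_def C_def card_SL_N .
  have traces: "int (nb \<beta>) = int q ^ ((n choose 2) - 1) *
           ((\<Prod>j=2..n. int q ^ j - 1) + 1 + int q * theta r n \<beta>)" for \<beta>
    using card_SL_trace_eq[OF assms(3,1,4,2), of \<beta>] unfolding nb_def q_def n_def .
  have weights: "C i = (\<Sum>\<nu>\<in>{\<nu>::'a \<Rightarrow> nat. (\<Sum>\<beta>\<in>UNIV. \<nu> \<beta>) = i
                                  \<and> (\<Sum>\<beta>\<in>UNIV. of_nat (\<nu> \<beta>) * \<beta>) = 0}.
                      \<Prod>\<beta>\<in>UNIV. nb \<beta> choose \<nu> \<beta>)" for i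
    unfolding C_def nb_def by (rule weight_dist_eq_sum_prod_choose)
  show ?thesis using card_SL_N moments traces weights by blast
qed

end
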